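(* With $Z_L(t)=\partial z_L(t)/\partial L$, we have $\lim_{L\to\infty}Z_L(L)=-1$ and $\lim_{L\to\infty}Z_L(L/2)=1/2$.
   Context: For $\alpha\in(0,1/\sqrt2)$ let $L_\alpha=\pi/\mathrm{AGM}(\alpha,\tfrac12\sqrt{1+2\alpha^2})$; $\alpha\mapsto L_\alpha$ is a decreasing bijection from $(0,1/\sqrt2)$ onto $(\pi\sqrt2,\infty)$. For $L>\pi\sqrt2$ let $\alpha$ satisfy $L_\alpha=L$ and let $x_0>y_0>0$ satisfy $x_0^2+y_0^2=1$, $x_0y_0=\alpha^2$. Let $(x_L,y_L,z_L)(t)$ solve $x'=-xz$, $y'=yz$, $z'=x^2-y^2$ ($'=d/dt$) with initial value $(x_0,y_0,0)$. *)

theory Defs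
  imports "HOL-Analysis.Analysis"
begin

fun agm_seq :: "real \<Rightarrow> real \<Rightarrow> nat \<Rightarrow> real \<times> real" where
  "agm_seq a b 0 = (a, b)"
| "agm_seq a b (Suc n) =
     (let (p, q) = agm_seq a b n in ((p + q) / 2, sqrt (p * q)))"

definition AGM :: "real \<Rightarrow> real \<Rightarrow> real" where
  "AGM a b = lim (\<lambda>n. fst (agm_seq a b n))"

definition L_alpha :: "real \<Rightarrow> real" where
  "L_alpha \<alpha> = pi / AGM \<alpha> (sqrt (1 + 2 * \<alpha>\<^sup>2) / 2)"

text \<open>For L > pi*sqrt 2, the unique alpha in (0, 1/sqrt 2) with L_alpha alpha = L.\<close>
definition alpha_of :: "real \<Rightarrow> real" where
  "alpha_of L = (THE \<alpha>. 0 < \<alpha> \<and> \<alpha> < 1 / sqrt 2 \<and> L_alpha \<alpha> = L)"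

definition init_xy :: "real \<Rightarrow> real \<times> real" where
  "init_xy L = (THE p. fst p > snd p \<and> snd p > 0 \<and> (fst p)\<^sup>2 + (snd p)\<^sup>2 = 1
                     \<and> fst p * snd p = (alpha_of L)\<^sup>2)"

definition vf :: "real \<times> real \<times> real \<Rightarrow> real \<times> real \<times> real" where
  "vf p = (case p of (x, y, z) \<Rightarrow> (- x * z, y * z, x\<^sup>2 - y\<^sup>2))"

definition sol :: "real \<Rightarrow> real \<Rightarrow> real \<times> real \<times> real" where
  "sol L = (THE f. f 0 = (fst (init_xy L), snd (init_xy L), 0)
                 \<and> (\<forall>t. (f has_vector_derivative vf (f t)) (at t)))"

definition zL :: "real \<Rightarrow> real \<Rightarrow> real" where
  "zL L t = snd (snd (sol L t))"

end

theory Submission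
  imports Defs
begin

text \<open>
  The solution is explicit. Write \<open>a = sqrt (1 - 2 \<alpha>\<^sup>2)\<close> and \<open>b = x\<^sub>0 + y\<^sub>0 = sqrt (1 + 2 \<alpha>\<^sup>2)\<close>.
  Then \<open>x - y = a cos \<phi>\<close>, \<open>z = a sin \<phi>\<close>, \<open>x + y = \<phi>'\<close>, where the phase \<open>\<phi>\<close> inverts the
  elliptic integral \<open>t = \<integral>\<^sub>0\<^sup>\<phi> d\<theta> / sqrt (b\<^sup>2 cos\<^sup>2 \<theta> + 4 \<alpha>\<^sup>2 sin\<^sup>2 \<theta>)\<close>; the solution of the
  ODE is unique by Gronwall's inequality on the sphere \<open>x\<^sup>2 + y\<^sup>2 + z\<^sup>2 = 1\<close>. So \<open>z\<close> has period
  four times the complete integral, which by Landen's transformation and Gauss's AGM formula is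
  \<open>L_alpha \<alpha>\<close>. For \<open>\<alpha> = alpha_of L\<close> the solution therefore has period exactly \<open>L\<close>, and by
  periodicity \<open>zL L' L = zL L' (L - L')\<close> and \<open>zL L' (L / 2) = - zL L' ((L - L') / 2)\<close>. As the
  phase is \<open>\<approx> b s\<close> for small times \<open>s\<close>, differentiating at \<open>L' = L\<close> gives \<open>- a b\<close> and \<open>a b / 2\<close>,
  and \<open>a b = sqrt (1 - 4 \<alpha>\<^sup>4) \<rightarrow> 1\<close> because \<open>alpha_of L \<le> pi / L\<close>.
\<close>

section \<open>The AGM iteration\<close>

lemma agm_seq_Suc:
  "agm_seq a b (Suc n) = ((fst (agm_seq a b n) + snd (agm_seq a b n)) / 2,
      sqrt (fst (agm_seq a b n) * snd (agm_seq a b n)))"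
  by (simp add: case_prod_beta Let_def)

declare agm_seq.simps(2)[simp del]

lemma agm_seq_pos:
  assumes "a > 0" "b > 0"
  shows "fst (agm_seq a b n) > 0" "snd (agm_seq a b n) > 0"
  using assms by (induction n) (auto simp: agm_seq_Suc)

lemma agm_seq_snd_le_fst:
  assumes "a > 0" "b > 0"
  shows "snd (agm_seq a b (Suc n)) \<le> fst (agm_seq a b (Suc n))"
  using agm_seq_pos[OF assms, of n] arith_geo_mean_sqrt[of "fst (agm_seq a b n)" "snd (agm_seq a b n)"]
  by (simp add: agm_seq_Suc)

lemma agm_seq_converges:
  assumes "a > 0" "b > 0"
  shows "AGM a b > 0" "(\<lambda>n. fst (agm_seq a b n)) \<longlonglongrightarrow> AGM a b"
    "(\<lambda>n. snd (agm_seq a b n)) \<longlonglongrightarrow> AGM a b"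
proof -
  define A where "A n = fst (agm_seq a b (Suc n))" for n
  define B where "B n = snd (agm_seq a b (Suc n))" for n
  have pos: "A n > 0" "B n > 0" for n using agm_seq_pos[OF assms] A_def B_def by auto
  have ord: "B n \<le> A n" for n using agm_seq_snd_le_fst[OF assms] A_def B_def by auto
  have A_Suc: "A (Suc n) = (A n + B n) / 2" and B_Suc: "B (Suc n) = sqrt (A n * B n)" for n
    unfolding A_def B_def by (simp_all only: agm_seq_Suc[of a b "Suc n"]) simp_all
  have "decseq A"
    by (rule decseq_SucI) (use ord in \<open>simp add: A_Suc\<close>)
  have "incseq B"
  proof (rule incseq_SucI)
    fix n
    have "sqrt (B n * B n) \<le> sqrt (A n * B n)"
      using ord[of n] pos[of n] by (intro real_sqrt_le_mono mult_right_mono) auto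
    then show "B n \<le> B (Suc n)" using pos[of n] by (simp add: B_Suc)
  qed
  have "B 0 \<le> A n" for n using \<open>incseq B\<close> ord[of n] by (meson incseq_def order_trans zero_le)
  then obtain M where A_lim: "A \<longlonglongrightarrow> M" and "B 0 \<le> M"
    using decseq_convergent[OF \<open>decseq A\<close>, of "B 0"] by (metis LIMSEQ_le_const)
  have "(\<lambda>n. 2 * A (Suc n) - A n) \<longlonglongrightarrow> 2 * M - M"
    by (intro tendsto_intros A_lim[THEN LIMSEQ_Suc] A_lim)
  moreover have "(\<lambda>n. 2 * A (Suc n) - A n) = B" by (auto simp: A_Suc field_simps)
  ultimately have B_lim: "B \<longlonglongrightarrow> M" by simp
  have fst_lim: "(\<lambda>n. fst (agm_seq a b n)) \<longlonglongrightarrow> M"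
    using A_lim unfolding A_def by (rule LIMSEQ_imp_Suc)
  then have "AGM a b = M" unfolding AGM_def by (rule limI)
  then show "(\<lambda>n. fst (agm_seq a b n)) \<longlonglongrightarrow> AGM a b" using fst_lim by simp
  show "(\<lambda>n. snd (agm_seq a b n)) \<longlonglongrightarrow> AGM a b"
    using B_lim \<open>AGM a b = M\<close> unfolding B_def by (simp add: LIMSEQ_imp_Suc)
  show "AGM a b > 0" using \<open>B 0 \<le> M\<close> pos[of 0] \<open>AGM a b = M\<close> by linarith
qed

section \<open>Gauss's elliptic integral\<close>

lemma eq_if_same_real_derivative:
  fixes F G f :: "real \<Rightarrow> real"
  assumes "\<And>x. (F has_real_derivative f x) (at x)" "\<And>x. (G has_real_derivative f x) (at x)"
    and "F c = G c"
  shows "F x = G x"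
proof -
  have "\<forall>x. ((\<lambda>x. F x - G x) has_real_derivative 0) (at x)"
    using assms(1,2) by (metis DERIV_diff diff_self)
  from DERIV_isconst_all[OF this, of x c] assms(3) show ?thesis by simp
qed

lemma mvt_from_0:
  fixes F f :: "real \<Rightarrow> real"
  assumes "\<And>x. (F has_real_derivative f x) (at x)"
  obtains \<xi> where "F x - F 0 = x * f \<xi>" "\<bar>\<xi>\<bar> \<le> \<bar>x\<bar>"
proof (cases x "0::real" rule: linorder_cases)
  case less
  then obtain z where "x < z" "z < 0" "F 0 - F x = (0 - x) * f z"
    using MVT2[of x 0 F f] assms by blast
  then show ?thesis by (intro that[of z]) (auto simp: algebra_simps)
next
  case greater
  then obtain z where "0 < z" "z < x" "F x - F 0 = (x - 0) * f z"
    using MVT2[of 0 x F f] assms by blast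
  then show ?thesis by (intro that[of z]) auto
qed (use that in auto)

definition gauss_integrand :: "real \<Rightarrow> real \<Rightarrow> real \<Rightarrow> real" where
  "gauss_integrand a b t = 1 / sqrt (a\<^sup>2 * (cos t)\<^sup>2 + b\<^sup>2 * (sin t)\<^sup>2)"

lemma quadform_bounds:
  fixes a b t :: real
  assumes "a > 0" "b > 0"
  shows "(min a b)\<^sup>2 \<le> a\<^sup>2 * (cos t)\<^sup>2 + b\<^sup>2 * (sin t)\<^sup>2"
    and "a\<^sup>2 * (cos t)\<^sup>2 + b\<^sup>2 * (sin t)\<^sup>2 \<le> (max a b)\<^sup>2"
proof -
  have "(min a b)\<^sup>2 \<le> a\<^sup>2" "(min a b)\<^sup>2 \<le> b\<^sup>2" "a\<^sup>2 \<le> (max a b)\<^sup>2" "b\<^sup>2 \<le> (max a b)\<^sup>2"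
    using assms by (auto simp: min_def max_def intro!: power_mono)
  moreover have "c = c * (cos t)\<^sup>2 + c * (sin t)\<^sup>2" for c :: real
    by (metis distrib_left mult.right_neutral sin_cos_squared_add2)
  ultimately show "(min a b)\<^sup>2 \<le> a\<^sup>2 * (cos t)\<^sup>2 + b\<^sup>2 * (sin t)\<^sup>2"
    and "a\<^sup>2 * (cos t)\<^sup>2 + b\<^sup>2 * (sin t)\<^sup>2 \<le> (max a b)\<^sup>2"
    by (metis add_mono mult_right_mono zero_le_power2)+
qed

lemma quadform_pos:
  fixes a b t :: real
  assumes "a > 0" "b > 0"
  shows "a\<^sup>2 * (cos t)\<^sup>2 + b\<^sup>2 * (sin t)\<^sup>2 > 0"
  using quadform_bounds(1)[OF assms, of t] assms
  by (metis min_def order_less_le_trans zero_less_power)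

lemma gauss_integrand_bounds:
  fixes a b t :: real
  assumes "a > 0" "b > 0"
  shows "1 / max a b \<le> gauss_integrand a b t" "gauss_integrand a b t \<le> 1 / min a b"
    "gauss_integrand a b t > 0"
proof -
  let ?q = "a\<^sup>2 * (cos t)\<^sup>2 + b\<^sup>2 * (sin t)\<^sup>2"
  have "min a b \<le> sqrt ?q" "sqrt ?q \<le> max a b"
    using real_sqrt_le_mono[OF quadform_bounds(1)[OF assms, of t]]
      real_sqrt_le_mono[OF quadform_bounds(2)[OF assms, of t]] assms by auto
  then show "1 / max a b \<le> gauss_integrand a b t" "gauss_integrand a b t \<le> 1 / min a b"
    unfolding gauss_integrand_def using quadform_pos[OF assms, of t] assms
    by (auto intro!: divide_left_mono)
  show "gauss_integrand a b t > 0"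
    unfolding gauss_integrand_def using quadform_pos[OF assms, of t] by simp
qed

lemma isCont_gauss_integrand:
  assumes "a > 0" "b > 0"
  shows "isCont (gauss_integrand a b) x"
  unfolding gauss_integrand_def using quadform_pos[OF assms, of x]
  by (intro continuous_intros) auto

text \<open>\<open>gauss_integral a b x = \<integral>\<^sub>0\<^sup>x gauss_integrand a b\<close> for all real \<open>x\<close>, taken as the
  antiderivative vanishing at \<open>0\<close>; it is unspecified unless \<open>a, b > 0\<close>.\<close>

definition gauss_integral :: "real \<Rightarrow> real \<Rightarrow> real \<Rightarrow> real" where
  "gauss_integral a b =
     (SOME F. F 0 = 0 \<and> (\<forall>x. (F has_real_derivative gauss_integrand a b x) (at x)))"

lemma gauss_integral_exists:
  assumes "a > 0" "b > 0"
  shows "\<exists>F. F 0 = 0 \<and> (\<forall>x. (F has_real_derivative gauss_integrand a b x) (at x))"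
proof -
  obtain F where F: "\<forall>x::real. (-\<infinity>::ereal) < x \<longrightarrow> x < \<infinity> \<longrightarrow>
       (F has_vector_derivative gauss_integrand a b x) (at x)"
    using einterval_antiderivative[of "-\<infinity>" "\<infinity>" "gauss_integrand a b"]
      isCont_gauss_integrand[OF assms] by auto
  have "((\<lambda>x. F x - F 0) has_real_derivative gauss_integrand a b x) (at x)" for x
    using F by (auto simp: has_real_derivative_iff_has_vector_derivative intro!: derivative_eq_intros)
  then show ?thesis by (intro exI[of _ "\<lambda>x. F x - F 0"]) auto
qed

lemma
  assumes "a > 0" "b > 0"
  shows gauss_integral_0 [simp]: "gauss_integral a b 0 = 0"
    and has_real_derivative_gauss_integral:
      "(gauss_integral a b has_real_derivative gauss_integrand a b x) (at x)"
  using someI_ex[OF gauss_integral_exists[OF assms]] unfolding gauss_integral_def[symmetric] by auto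

lemma gauss_integral_chain:
  assumes "a > 0" "b > 0" "(g has_real_derivative g') (at x)"
  shows "((\<lambda>x. gauss_integral a b (g x)) has_real_derivative gauss_integrand a b (g x) * g') (at x)"
  using DERIV_chain2[OF has_real_derivative_gauss_integral[OF assms(1,2)] assms(3)] .

lemma gauss_integral_mvt:
  assumes "a > 0" "b > 0"
  obtains \<xi> where "gauss_integral a b x = x * gauss_integrand a b \<xi>" "\<bar>\<xi>\<bar> \<le> \<bar>x\<bar>"
  using mvt_from_0[OF has_real_derivative_gauss_integral[OF assms], of x] assms by auto

lemma gauss_integral_add_pi:
  assumes "a > 0" "b > 0"
  shows "gauss_integral a b (x + pi) = gauss_integral a b x + gauss_integral a b pi"
proof (rule eq_if_same_real_derivative[where c = 0 and F = "\<lambda>x. gauss_integral a b (x + pi)"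
      and G = "\<lambda>x. gauss_integral a b x + gauss_integral a b pi"])
  fix x
  have "((\<lambda>x. x + pi) has_real_derivative 1) (at x)" by (auto intro!: derivative_eq_intros)
  from gauss_integral_chain[OF assms this]
  show "((\<lambda>x. gauss_integral a b (x + pi)) has_real_derivative gauss_integrand a b x) (at x)"
    by (simp add: gauss_integrand_def)
  show "((\<lambda>x. gauss_integral a b x + gauss_integral a b pi) has_real_derivative gauss_integrand a b x) (at x)"
    using has_real_derivative_gauss_integral[OF assms] by (auto intro!: derivative_eq_intros)
qed (simp add: assms)

lemma gauss_integral_pi:
  assumes "a > 0" "b > 0"
  shows "gauss_integral a b pi = 2 * gauss_integral a b (pi / 2)"
proof -
  have "gauss_integral a b (pi - x) = gauss_integral a b pi - gauss_integral a b x" for x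
  proof (rule eq_if_same_real_derivative[where c = 0 and F = "\<lambda>x. gauss_integral a b (pi - x)"
        and G = "\<lambda>x. gauss_integral a b pi - gauss_integral a b x"])
    fix x
    have "((\<lambda>x. pi - x) has_real_derivative -1) (at x)" by (auto intro!: derivative_eq_intros)
    from gauss_integral_chain[OF assms this]
    show "((\<lambda>x. gauss_integral a b (pi - x)) has_real_derivative - gauss_integrand a b x) (at x)"
      by (simp add: gauss_integrand_def)
    show "((\<lambda>x. gauss_integral a b pi - gauss_integral a b x) has_real_derivative
        - gauss_integrand a b x) (at x)"
      using has_real_derivative_gauss_integral[OF assms] by (auto intro!: derivative_eq_intros)
  qed (simp add: assms)
  from this[of "pi / 2"] show ?thesis by simp
qed

lemma gauss_integral_swap:
  assumes "a > 0" "b > 0"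
  shows "gauss_integral b a (pi / 2) = gauss_integral a b (pi / 2)"
proof -
  have "gauss_integral b a x = gauss_integral a b (pi / 2) - gauss_integral a b (pi / 2 - x)" for x
  proof (rule eq_if_same_real_derivative[where c = 0 and F = "gauss_integral b a"
        and G = "\<lambda>x. gauss_integral a b (pi / 2) - gauss_integral a b (pi / 2 - x)"])
    fix x
    show "(gauss_integral b a has_real_derivative gauss_integrand b a x) (at x)"
      using has_real_derivative_gauss_integral[OF assms(2,1)] .
    have "gauss_integrand a b (pi / 2 - x) = gauss_integrand b a x"
      by (simp add: gauss_integrand_def cos_diff sin_diff add.commute)
    moreover have "((\<lambda>x. pi / 2 - x) has_real_derivative -1) (at x)"
      by (auto intro!: derivative_eq_intros)
    note gauss_integral_chain[OF assms this]
    ultimately show "((\<lambda>x. gauss_integral a b (pi / 2) - gauss_integral a b (pi / 2 - x))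
        has_real_derivative gauss_integrand b a x) (at x)"
      by (auto intro!: derivative_eq_intros)
  qed (simp add: assms)
  from this[of "pi / 2"] show ?thesis using assms by simp
qed

lemma gauss_integral_scale:
  assumes "a > 0" "b > 0" "l > 0"
  shows "gauss_integral (l * a) (l * b) x = gauss_integral a b x / l"
proof (rule eq_if_same_real_derivative[where c = 0 and F = "gauss_integral (l * a) (l * b)"
      and G = "\<lambda>x. gauss_integral a b x / l"])
  fix x
  have la: "l * a > 0" "l * b > 0" using assms by auto
  then show "(gauss_integral (l * a) (l * b) has_real_derivative gauss_integrand (l * a) (l * b) x) (at x)"
    by (rule has_real_derivative_gauss_integral)
  have "(l * a)\<^sup>2 * (cos x)\<^sup>2 + (l * b)\<^sup>2 * (sin x)\<^sup>2 = l\<^sup>2 * (a\<^sup>2 * (cos x)\<^sup>2 + b\<^sup>2 * (sin x)\<^sup>2)"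
    by (simp add: algebra_simps power_mult_distrib)
  then have "gauss_integrand (l * a) (l * b) x = gauss_integrand a b x / l"
    using assms by (simp add: gauss_integrand_def real_sqrt_mult)
  then show "((\<lambda>x. gauss_integral a b x / l) has_real_derivative gauss_integrand (l * a) (l * b) x) (at x)"
    using has_real_derivative_gauss_integral[OF assms(1,2)] assms(3) by (auto intro!: derivative_eq_intros)
qed (use assms in simp)

lemma gauss_integral_pi_half_bounds:
  assumes "a > 0" "b > 0"
  shows "(pi / 2) / max a b \<le> gauss_integral a b (pi / 2)"
    "gauss_integral a b (pi / 2) \<le> (pi / 2) / min a b"
proof -
  obtain \<xi> where \<xi>: "gauss_integral a b (pi / 2) = (pi / 2) * gauss_integrand a b \<xi>"
    using gauss_integral_mvt[OF assms] by blast
  show "(pi / 2) / max a b \<le> gauss_integral a b (pi / 2)"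
    using gauss_integrand_bounds(1)[OF assms, of \<xi>] unfolding \<xi> by (simp add: divide_simps)
  show "gauss_integral a b (pi / 2) \<le> (pi / 2) / min a b"
    using gauss_integrand_bounds(2)[OF assms, of \<xi>] assms unfolding \<xi> by (simp add: divide_simps)
qed

section \<open>Landen's transformation and Gauss's AGM formula\<close>

text \<open>The substitution behind Landen's transformation: \<open>tan (landen_angle k x) = k * tan x\<close>,
  written so that it is smooth and increasing on all of \<open>\<real>\<close>.\<close>

definition landen_angle :: "real \<Rightarrow> real \<Rightarrow> real" where
  "landen_angle k x = x + arctan ((k - 1) * sin x * cos x / ((cos x)\<^sup>2 + k * (sin x)\<^sup>2))"

lemma landen_denominators_pos:
  fixes k x :: real
  shows "k > 0 \<Longrightarrow> (cos x)\<^sup>2 + k * (sin x)\<^sup>2 > 0" "k > 0 \<Longrightarrow> (cos x)\<^sup>2 + k\<^sup>2 * (sin x)\<^sup>2 > 0"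
  using quadform_pos[of 1 "sqrt k" x] quadform_pos[of 1 k x] by auto

lemma has_real_derivative_landen_angle:
  fixes k x :: real
  assumes k: "k > 0"
  shows "(landen_angle k has_real_derivative k / ((cos x)\<^sup>2 + k\<^sup>2 * (sin x)\<^sup>2)) (at x)"
proof -
  define N E where "N y = (k - 1) * sin y * cos y" and "E y = (cos y)\<^sup>2 + k * (sin y)\<^sup>2" for y
  define C S where "C = cos x" and "S = sin x"
  have sc: "C\<^sup>2 + S\<^sup>2 = 1" unfolding C_def S_def by simp
  have E: "E x > 0" and Q: "C\<^sup>2 + k\<^sup>2 * S\<^sup>2 > 0"
    using landen_denominators_pos[OF k] unfolding E_def C_def S_def by auto
  have dN: "(N has_real_derivative (k - 1) * (C\<^sup>2 - S\<^sup>2)) (at x)"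
    unfolding N_def C_def S_def by (auto intro!: derivative_eq_intros simp: power2_eq_square algebra_simps)
  have dE: "(E has_real_derivative 2 * (k - 1) * S * C) (at x)"
    unfolding E_def C_def S_def by (auto intro!: derivative_eq_intros simp: algebra_simps)
  define P where "P = (k - 1) * (C\<^sup>2 - S\<^sup>2) * E x - N x * (2 * (k - 1) * S * C)"
  have "((\<lambda>y. y + arctan (N y / E y)) has_real_derivative
      1 + inverse (1 + (N x / E x)\<^sup>2) * (P / (E x * E x))) (at x)"
    unfolding P_def using E by (intro derivative_intros DERIV_divide dN dE) auto
  moreover have "(E x)\<^sup>2 + (N x)\<^sup>2 = C\<^sup>2 + k\<^sup>2 * S\<^sup>2"
    using sc unfolding N_def E_def C_def[symmetric] S_def[symmetric] by algebra
  moreover have "C\<^sup>2 + k\<^sup>2 * S\<^sup>2 + P = k"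
    using sc unfolding P_def N_def E_def C_def[symmetric] S_def[symmetric] by algebra
  ultimately have "((\<lambda>y. y + arctan (N y / E y)) has_real_derivative k / (C\<^sup>2 + k\<^sup>2 * S\<^sup>2)) (at x)"
    using E Q by (simp add: field_simps power2_eq_square)
  then show ?thesis unfolding N_def E_def C_def S_def landen_angle_def[abs_def] .
qed

lemma landen_angle_cos_sin:
  fixes k x :: real
  assumes k: "k > 0"
  defines "Q \<equiv> (cos x)\<^sup>2 + k\<^sup>2 * (sin x)\<^sup>2"
  shows "cos (landen_angle k x) = cos x / sqrt Q" "sin (landen_angle k x) = k * sin x / sqrt Q"
proof -
  define C S where "C = cos x" and "S = sin x"
  define E where "E = C\<^sup>2 + k * S\<^sup>2"
  define u where "u = (k - 1) * S * C / E"
  have sc: "C\<^sup>2 + S\<^sup>2 = 1" unfolding C_def S_def by simp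
  have E: "E > 0" and "Q > 0"
    using landen_denominators_pos[OF k] unfolding E_def Q_def C_def S_def by auto
  have "E\<^sup>2 + ((k - 1) * S * C)\<^sup>2 = Q" unfolding E_def Q_def C_def[symmetric] S_def[symmetric] using sc by algebra
  then have root: "sqrt (1 + u\<^sup>2) = sqrt Q / E"
    using E unfolding u_def by (simp add: field_simps real_sqrt_divide)
  have "C * E - S * ((k - 1) * S * C) = C" "S * E + C * ((k - 1) * S * C) = k * S"
    unfolding E_def using sc by algebra+
  then have "C - S * u = C / E" "S + C * u = k * S / E"
    using E unfolding u_def by (simp_all add: field_simps)
  moreover have "cos (x + arctan u) = (C - S * u) / sqrt (1 + u\<^sup>2)"
    "sin (x + arctan u) = (S + C * u) / sqrt (1 + u\<^sup>2)"
    unfolding cos_add sin_add cos_arctan sin_arctan C_def S_def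
    by (simp_all add: diff_divide_distrib add_divide_distrib algebra_simps)
  ultimately have "cos (x + arctan u) = C / sqrt Q" "sin (x + arctan u) = k * S / sqrt Q"
    using E unfolding root by simp_all
  then show "cos (landen_angle k x) = cos x / sqrt Q" "sin (landen_angle k x) = k * sin x / sqrt Q"
    unfolding landen_angle_def u_def E_def C_def S_def .
qed

lemma landen_integrand_identity:
  fixes a b x :: real
  assumes a: "a > 0" and b: "b > 0"
  defines "k \<equiv> sqrt (a / b)"
  shows "gauss_integrand a b (landen_angle k x) * (k / ((cos x)\<^sup>2 + k\<^sup>2 * (sin x)\<^sup>2))
         = gauss_integrand (sqrt (a * b)) ((a + b) / 2) (2 * x)"
proof -
  define Q D where "Q = (cos x)\<^sup>2 + k\<^sup>2 * (sin x)\<^sup>2" and "D = a\<^sup>2 * (cos x)\<^sup>2 + b\<^sup>2 * k\<^sup>2 * (sin x)\<^sup>2"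
  define R where "R = (sqrt (a * b))\<^sup>2 * (cos (2 * x))\<^sup>2 + ((a + b) / 2)\<^sup>2 * (sin (2 * x))\<^sup>2"
  have k: "k > 0" "k\<^sup>2 * b = a" using a b unfolding k_def by auto
  have Q: "Q > 0" using landen_denominators_pos[OF k(1)] unfolding Q_def by simp
  have D: "D > 0"
    using quadform_pos[of a "b * k" x] a b k unfolding D_def by (simp add: power_mult_distrib)
  have quad: "a\<^sup>2 * (cos (landen_angle k x))\<^sup>2 + b\<^sup>2 * (sin (landen_angle k x))\<^sup>2 = D / Q"
    using Q unfolding landen_angle_cos_sin[OF k(1)] Q_def[symmetric] D_def
    by (simp add: power_divide power_mult_distrib add_divide_distrib)
  have "gauss_integrand a b (landen_angle k x) * (k / Q) = k / sqrt (Q * D)"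
    using Q D unfolding gauss_integrand_def quad
    by (simp add: real_sqrt_divide real_sqrt_mult field_simps)
  also have "Q * D = k\<^sup>2 * R"
    using a b unfolding Q_def D_def R_def cos_double sin_double k(2)[symmetric]
    by (simp add: power2_eq_square algebra_simps)
  also have "k / sqrt (k\<^sup>2 * R) = gauss_integrand (sqrt (a * b)) ((a + b) / 2) (2 * x)"
    using k(1) unfolding gauss_integrand_def R_def by (simp add: real_sqrt_mult)
  finally show ?thesis unfolding Q_def .
qed

lemma gauss_integral_landen:
  assumes a: "a > 0" and b: "b > 0"
  shows "gauss_integral a b (pi / 2) = gauss_integral ((a + b) / 2) (sqrt (a * b)) (pi / 2)"
proof -
  define k where "k = sqrt (a / b)"
  have k: "k > 0" using a b unfolding k_def by simp
  have means: "(a + b) / 2 > 0" "sqrt (a * b) > 0" using a b by auto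
  have "gauss_integral a b (landen_angle k x) = gauss_integral (sqrt (a * b)) ((a + b) / 2) (2 * x) / 2" for x
  proof (rule eq_if_same_real_derivative[where c = 0 and F = "\<lambda>x. gauss_integral a b (landen_angle k x)"
        and G = "\<lambda>x. gauss_integral (sqrt (a * b)) ((a + b) / 2) (2 * x) / 2"])
    fix x
    show "((\<lambda>x. gauss_integral a b (landen_angle k x)) has_real_derivative
        gauss_integrand (sqrt (a * b)) ((a + b) / 2) (2 * x)) (at x)"
      using gauss_integral_chain[OF a b has_real_derivative_landen_angle[OF k, of x]]
        landen_integrand_identity[OF a b, of x]
      unfolding k_def by simp
    have "((\<lambda>x. 2 * x) has_real_derivative 2) (at x)" by (auto intro!: derivative_eq_intros)
    from gauss_integral_chain[OF means(2,1) this]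
    show "((\<lambda>x. gauss_integral (sqrt (a * b)) ((a + b) / 2) (2 * x) / 2) has_real_derivative
        gauss_integrand (sqrt (a * b)) ((a + b) / 2) (2 * x)) (at x)"
      by (auto intro!: derivative_eq_intros)
  qed (use a b means in \<open>simp add: landen_angle_def\<close>)
  from this[of "pi / 2"] show ?thesis
    using gauss_integral_pi[OF means(2,1)] gauss_integral_swap[OF means] by (simp add: landen_angle_def)
qed

lemma gauss_integral_agm_seq:
  assumes "a > 0" "b > 0"
  shows "gauss_integral a b (pi / 2) = gauss_integral (fst (agm_seq a b n)) (snd (agm_seq a b n)) (pi / 2)"
proof (induction n)
  case (Suc n)
  then show ?case
    using gauss_integral_landen[OF agm_seq_pos[OF assms, of n]] by (simp add: agm_seq_Suc)
qed simp

theorem gauss_integral_eq_agm: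
  assumes "a > 0" "b > 0"
  shows "gauss_integral a b (pi / 2) = pi / (2 * AGM a b)"
proof -
  define A B where "A n = fst (agm_seq a b n)" and "B n = snd (agm_seq a b n)" for n
  note M = agm_seq_converges[OF assms, folded A_def B_def]
  have pos: "A n > 0" "B n > 0" for n using agm_seq_pos[OF assms] A_def B_def by auto
  have I: "gauss_integral a b (pi / 2) = gauss_integral (A n) (B n) (pi / 2)" for n
    unfolding A_def B_def by (rule gauss_integral_agm_seq[OF assms])
  have "(\<lambda>n. (pi / 2) / max (A n) (B n)) \<longlonglongrightarrow> (pi / 2) / max (AGM a b) (AGM a b)"
    "(\<lambda>n. (pi / 2) / min (A n) (B n)) \<longlonglongrightarrow> (pi / 2) / min (AGM a b) (AGM a b)"
    using tendsto_max[OF M(2,3)] tendsto_min[OF M(2,3)] M(1) by (auto intro!: tendsto_intros)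
  moreover have "(pi / 2) / max (A n) (B n) \<le> gauss_integral a b (pi / 2)"
    "gauss_integral a b (pi / 2) \<le> (pi / 2) / min (A n) (B n)" for n
    using gauss_integral_pi_half_bounds[OF pos] I by metis+
  ultimately have "(pi / 2) / AGM a b \<le> gauss_integral a b (pi / 2)"
    "gauss_integral a b (pi / 2) \<le> (pi / 2) / AGM a b"
    by (auto intro: LIMSEQ_le_const2 LIMSEQ_le_const)
  then show ?thesis by simp
qed

lemma gauss_integrand_strict_antimono:
  assumes "0 < a" "a < a'" "0 < b" "b < b'"
  shows "gauss_integrand a' b' t < gauss_integrand a b t"
proof -
  define d where "d = min (a'\<^sup>2 - a\<^sup>2) (b'\<^sup>2 - b\<^sup>2)"
  have "a\<^sup>2 < a'\<^sup>2" "b\<^sup>2 < b'\<^sup>2" using assms by (auto intro: power_strict_mono)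
  then have "0 < d" unfolding d_def by simp
  also have "d = d * (cos t)\<^sup>2 + d * (sin t)\<^sup>2"
    by (metis distrib_left mult.right_neutral sin_cos_squared_add2)
  also have "\<dots> \<le> (a'\<^sup>2 - a\<^sup>2) * (cos t)\<^sup>2 + (b'\<^sup>2 - b\<^sup>2) * (sin t)\<^sup>2"
    unfolding d_def by (intro add_mono mult_right_mono) auto
  finally have "a\<^sup>2 * (cos t)\<^sup>2 + b\<^sup>2 * (sin t)\<^sup>2 < a'\<^sup>2 * (cos t)\<^sup>2 + b'\<^sup>2 * (sin t)\<^sup>2"
    by (simp add: algebra_simps)
  then have "sqrt (a\<^sup>2 * (cos t)\<^sup>2 + b\<^sup>2 * (sin t)\<^sup>2) < sqrt (a'\<^sup>2 * (cos t)\<^sup>2 + b'\<^sup>2 * (sin t)\<^sup>2)"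
    by (rule real_sqrt_less_mono)
  then show ?thesis
    unfolding gauss_integrand_def using quadform_pos[of a b t] assms
    by (simp add: divide_strict_left_mono)
qed

lemma gauss_integral_strict_antimono:
  assumes "0 < a" "a < a'" "0 < b" "b < b'" "x > 0"
  shows "gauss_integral a' b' x < gauss_integral a b x"
proof -
  have pos: "a' > 0" "b' > 0" using assms by auto
  have "((\<lambda>x. gauss_integral a b x - gauss_integral a' b' x) has_real_derivative
      gauss_integrand a b y - gauss_integrand a' b' y) (at y)" for y
    using has_real_derivative_gauss_integral[OF assms(1,3), of y]
      has_real_derivative_gauss_integral[OF pos, of y]
    by (rule DERIV_diff)
  from mvt_from_0[OF this, of x] obtain \<xi> where
    "gauss_integral a b x - gauss_integral a' b' x - (gauss_integral a b 0 - gauss_integral a' b' 0) =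
      x * (gauss_integrand a b \<xi> - gauss_integrand a' b' \<xi>)"
    by metis
  then have "gauss_integral a b x - gauss_integral a' b' x =
      x * (gauss_integrand a b \<xi> - gauss_integrand a' b' \<xi>)"
    using assms(1,3) pos by simp
  moreover have "gauss_integrand a' b' \<xi> < gauss_integrand a b \<xi>"
    using assms by (intro gauss_integrand_strict_antimono)
  then have "x * gauss_integrand a' b' \<xi> < x * gauss_integrand a b \<xi>"
    using \<open>x > 0\<close> by simp
  ultimately show ?thesis by (simp add: algebra_simps)
qed

lemma gauss_integral_pi_half_ge_log:
  assumes b: "b > 0" and c: "c > 0"
  shows "gauss_integral b c (pi / 2) \<ge> (ln (b * (pi / 2) + c) - ln c) / b"
proof -
  define G where "G \<theta> = - (1 / b) * ln (b * (pi / 2 - \<theta>) + c)" for \<theta>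
  have "gauss_integral b c 0 - G 0 \<le> gauss_integral b c (pi / 2) - G (pi / 2)"
  proof (rule DERIV_nonneg_imp_nondecreasing[of 0 "pi / 2"])
    fix \<theta> assume \<theta>: "0 \<le> \<theta>" "\<theta> \<le> pi / 2"
    have pos: "b * (pi / 2 - \<theta>) + c > 0" using \<theta> b c by (simp add: add_nonneg_pos)
    have "((\<lambda>\<theta>. b * (pi / 2 - \<theta>) + c) has_real_derivative -b) (at \<theta>)"
      by (auto intro!: derivative_eq_intros)
    from DERIV_cmult[OF DERIV_chain2[OF DERIV_ln_divide[OF pos] this], of "- (1 / b)"]
    have "(G has_real_derivative 1 / (b * (pi / 2 - \<theta>) + c)) (at \<theta>)"
      unfolding G_def using b by (simp add: field_simps)
    moreover have "1 / (b * (pi / 2 - \<theta>) + c) \<le> gauss_integrand b c \<theta>"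
    proof -
      have cos: "0 \<le> cos \<theta>" "cos \<theta> \<le> pi / 2 - \<theta>"
        using \<theta> sin_x_le_x[of "pi / 2 - \<theta>"] by (auto simp: cos_ge_zero sin_cos_eq)
      have "c\<^sup>2 * (sin \<theta>)\<^sup>2 \<le> c\<^sup>2" by (simp add: abs_square_le_1 mult_left_le)
      moreover have "0 \<le> 2 * (b * cos \<theta>) * c" using b c cos by simp
      ultimately have "b\<^sup>2 * (cos \<theta>)\<^sup>2 + c\<^sup>2 * (sin \<theta>)\<^sup>2 \<le> (b * cos \<theta> + c)\<^sup>2"
        unfolding power2_sum power_mult_distrib by linarith
      then have "sqrt (b\<^sup>2 * (cos \<theta>)\<^sup>2 + c\<^sup>2 * (sin \<theta>)\<^sup>2) \<le> sqrt ((b * cos \<theta> + c)\<^sup>2)"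
        by (rule real_sqrt_le_mono)
      also have "\<dots> = b * cos \<theta> + c" using b c cos by simp
      also have "\<dots> \<le> b * (pi / 2 - \<theta>) + c" using cos b by simp
      finally have "sqrt (b\<^sup>2 * (cos \<theta>)\<^sup>2 + c\<^sup>2 * (sin \<theta>)\<^sup>2) \<le> b * (pi / 2 - \<theta>) + c" .
      then show ?thesis
        unfolding gauss_integrand_def using quadform_pos[OF b c, of \<theta>] pos
        by (simp add: divide_simps)
    qed
    ultimately show "\<exists>y. ((\<lambda>\<theta>. gauss_integral b c \<theta> - G \<theta>) has_real_derivative y) (at \<theta>) \<and> 0 \<le> y"
      using has_real_derivative_gauss_integral[OF b c, of \<theta>]
      by (intro exI conjI) (auto intro!: derivative_eq_intros)
  qed simp
  then show ?thesis using b c by (simp add: G_def field_simps)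
qed

lemma inverse_sqrt_lipschitz:
  fixes m q q' :: real
  assumes "m > 0" "m\<^sup>2 \<le> q" "m\<^sup>2 \<le> q'"
  shows "\<bar>1 / sqrt q - 1 / sqrt q'\<bar> \<le> \<bar>q - q'\<bar> / (2 * m ^ 3)"
proof -
  define s s' where "s = sqrt q" and "s' = sqrt q'"
  have "sqrt (m\<^sup>2) \<le> s" "sqrt (m\<^sup>2) \<le> s'"
    using assms(2,3) unfolding s_def s'_def by (simp_all only: real_sqrt_le_mono)
  then have "m \<le> s" "m \<le> s'" using assms(1) by simp_all
  then have pos: "s > 0" "s' > 0" "s + s' > 0" using assms(1) by linarith+
  have "q \<ge> 0" "q' \<ge> 0" using assms(2,3) zero_le_power2[of m] by linarith+
  then have "s\<^sup>2 = q" "s'\<^sup>2 = q'" unfolding s_def s'_def by simp_all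
  have "1 / s - 1 / s' = (s' - s) / (s * s')" using pos by (simp add: field_simps)
  also have "\<dots> = ((s' - s) * (s' + s)) / ((s * s') * (s' + s))" using pos by simp
  also have "\<dots> = (s'\<^sup>2 - s\<^sup>2) / (s * s' * (s + s'))" by (simp add: power2_eq_square algebra_simps)
  finally have "1 / s - 1 / s' = (s'\<^sup>2 - s\<^sup>2) / (s * s' * (s + s'))" .
  then have "\<bar>1 / s - 1 / s'\<bar> = \<bar>q - q'\<bar> / (s * s' * (s + s'))"
    using \<open>m \<le> s\<close> \<open>m \<le> s'\<close> \<open>m > 0\<close> \<open>s\<^sup>2 = q\<close> \<open>s'\<^sup>2 = q'\<close> by (simp add: abs_minus_commute)
  also have "\<dots> \<le> \<bar>q - q'\<bar> / (m * m * (m + m))"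
    using \<open>m \<le> s\<close> \<open>m \<le> s'\<close> \<open>m > 0\<close> by (intro divide_left_mono mult_mono add_mono) auto
  finally show ?thesis unfolding s_def s'_def by (simp add: power3_eq_cube)
qed
lemma gauss_integrand_lipschitz:
  assumes m: "m > 0" and "a \<ge> m" "b \<ge> m" "a' \<ge> m" "b' \<ge> m"
  shows "\<bar>gauss_integrand a b t - gauss_integrand a' b' t\<bar> \<le> (\<bar>a\<^sup>2 - a'\<^sup>2\<bar> + \<bar>b\<^sup>2 - b'\<^sup>2\<bar>) / (2 * m ^ 3)"
proof -
  define q q' where "q = a\<^sup>2 * (cos t)\<^sup>2 + b\<^sup>2 * (sin t)\<^sup>2" and "q' = a'\<^sup>2 * (cos t)\<^sup>2 + b'\<^sup>2 * (sin t)\<^sup>2"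
  have "m\<^sup>2 \<le> (min a b)\<^sup>2" "m\<^sup>2 \<le> (min a' b')\<^sup>2" using assms by (auto intro: power_mono)
  moreover have "(min a b)\<^sup>2 \<le> q" "(min a' b')\<^sup>2 \<le> q'"
    unfolding q_def q'_def using assms by (intro quadform_bounds; linarith)+
  ultimately have "m\<^sup>2 \<le> q" "m\<^sup>2 \<le> q'" by linarith+
  then have "\<bar>gauss_integrand a b t - gauss_integrand a' b' t\<bar> \<le> \<bar>q - q'\<bar> / (2 * m ^ 3)"
    unfolding gauss_integrand_def q_def[symmetric] q'_def[symmetric] by (rule inverse_sqrt_lipschitz[OF m])
  also have "\<bar>q - q'\<bar> \<le> \<bar>a\<^sup>2 - a'\<^sup>2\<bar> * (cos t)\<^sup>2 + \<bar>b\<^sup>2 - b'\<^sup>2\<bar> * (sin t)\<^sup>2"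
  proof -
    have "q - q' = (a\<^sup>2 - a'\<^sup>2) * (cos t)\<^sup>2 + (b\<^sup>2 - b'\<^sup>2) * (sin t)\<^sup>2"
      unfolding q_def q'_def by (simp add: algebra_simps)
    then show ?thesis by (simp add: abs_triangle_ineq[THEN order_trans] abs_mult)
  qed
  also have "\<dots> \<le> \<bar>a\<^sup>2 - a'\<^sup>2\<bar> + \<bar>b\<^sup>2 - b'\<^sup>2\<bar>"
    by (intro add_mono mult_left_le) (auto simp: abs_square_le_1)
  finally show ?thesis using m by (simp add: divide_right_mono)
qed

lemma gauss_integral_lipschitz:
  assumes m: "m > 0" and "a \<ge> m" "b \<ge> m" "a' \<ge> m" "b' \<ge> m"
  shows "\<bar>gauss_integral a b x - gauss_integral a' b' x\<bar>
    \<le> \<bar>x\<bar> * ((\<bar>a\<^sup>2 - a'\<^sup>2\<bar> + \<bar>b\<^sup>2 - b'\<^sup>2\<bar>) / (2 * m ^ 3))"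
proof -
  have pos: "a > 0" "b > 0" "a' > 0" "b' > 0" using assms by auto
  have "((\<lambda>x. gauss_integral a b x - gauss_integral a' b' x) has_real_derivative
      gauss_integrand a b y - gauss_integrand a' b' y) (at y)" for y
    using has_real_derivative_gauss_integral[OF pos(1,2), of y]
      has_real_derivative_gauss_integral[OF pos(3,4), of y]
    by (rule DERIV_diff)
  from mvt_from_0[OF this, of x] obtain \<xi> where
    "gauss_integral a b x - gauss_integral a' b' x - (gauss_integral a b 0 - gauss_integral a' b' 0) =
      x * (gauss_integrand a b \<xi> - gauss_integrand a' b' \<xi>)"
    by metis
  then have "\<bar>gauss_integral a b x - gauss_integral a' b' x\<bar>
      = \<bar>x\<bar> * \<bar>gauss_integrand a b \<xi> - gauss_integrand a' b' \<xi>\<bar>"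
    using pos by (simp add: abs_mult)
  also have "\<dots> \<le> \<bar>x\<bar> * ((\<bar>a\<^sup>2 - a'\<^sup>2\<bar> + \<bar>b\<^sup>2 - b'\<^sup>2\<bar>) / (2 * m ^ 3))"
    by (intro mult_left_mono gauss_integrand_lipschitz assms) auto
  finally show ?thesis .
qed

section \<open>The period as a function of \<open>\<alpha>\<close>\<close>

text \<open>For \<open>\<alpha> = alpha_of L\<close> the initial point satisfies \<open>x\<^sub>0 + y\<^sub>0 = init_sum \<alpha>\<close> and
  \<open>x\<^sub>0 - y\<^sub>0 = init_diff \<alpha>\<close>.\<close>

definition init_sum :: "real \<Rightarrow> real" where
  "init_sum \<alpha> = sqrt (1 + 2 * \<alpha>\<^sup>2)"

definition init_diff :: "real \<Rightarrow> real" where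
  "init_diff \<alpha> = sqrt (1 - 2 * \<alpha>\<^sup>2)"

definition period :: "real \<Rightarrow> real" where
  "period \<alpha> = 4 * gauss_integral (init_sum \<alpha>) (2 * \<alpha>) (pi / 2)"

lemma init_sum_ge_1: "init_sum \<alpha> \<ge> 1"
  unfolding init_sum_def by simp

lemma init_sum_pos: "init_sum \<alpha> > 0"
  using init_sum_ge_1[of \<alpha>] by linarith

lemma init_sum_squared: "(init_sum \<alpha>)\<^sup>2 = 1 + 2 * \<alpha>\<^sup>2"
  unfolding init_sum_def by (simp add: add_nonneg_nonneg)

lemma init_diff_squared: "\<alpha>\<^sup>2 \<le> 1 / 2 \<Longrightarrow> (init_diff \<alpha>)\<^sup>2 = 1 - 2 * \<alpha>\<^sup>2"
  unfolding init_diff_def by simp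

lemma L_alpha_eq_period:
  assumes "\<alpha> > 0"
  shows "L_alpha \<alpha> = period \<alpha>"
proof -
  have half: "init_sum \<alpha> / 2 > 0" using init_sum_pos by simp
  have "gauss_integral \<alpha> (init_sum \<alpha> / 2) (pi / 2) = gauss_integral ((1/2) * (2 * \<alpha>)) ((1/2) * init_sum \<alpha>) (pi / 2)"
    by simp
  also have "\<dots> = 2 * gauss_integral (init_sum \<alpha>) (2 * \<alpha>) (pi / 2)"
    using assms init_sum_pos gauss_integral_swap[of "init_sum \<alpha>" "2 * \<alpha>"]
    by (subst gauss_integral_scale) auto
  finally show ?thesis
    using gauss_integral_eq_agm[OF assms half] agm_seq_converges(1)[OF assms half]
    unfolding L_alpha_def period_def init_sum_def by (simp add: field_simps)
qed

lemma period_strict_antimono: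
  assumes "0 < \<alpha>" "\<alpha> < \<beta>"
  shows "period \<beta> < period \<alpha>"
proof -
  have "init_sum \<alpha> < init_sum \<beta>"
    using assms unfolding init_sum_def by (simp add: power_strict_mono)
  then show ?thesis
    unfolding period_def using assms init_sum_pos by (simp add: gauss_integral_strict_antimono)
qed

lemma period_pos:
  assumes "\<alpha> > 0"
  shows "period \<alpha> > 0"
proof -
  have "0 < (pi / 2) / max (init_sum \<alpha>) (2 * \<alpha>)" using init_sum_pos[of \<alpha>] by simp
  also have "\<dots> \<le> gauss_integral (init_sum \<alpha>) (2 * \<alpha>) (pi / 2)"
    using gauss_integral_pi_half_bounds(1)[OF init_sum_pos[of \<alpha>], of "2 * \<alpha>"] assms by simp
  finally show ?thesis unfolding period_def by simp
qed

lemma period_le: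
  assumes "0 < \<alpha>" "\<alpha>\<^sup>2 \<le> 1 / 2"
  shows "period \<alpha> \<le> pi / \<alpha>"
proof -
  have "(2 * \<alpha>)\<^sup>2 \<le> (init_sum \<alpha>)\<^sup>2"
    unfolding init_sum_squared using assms(2) by (simp add: power_mult_distrib)
  then have "2 * \<alpha> \<le> init_sum \<alpha>"
    using init_sum_pos[of \<alpha>] by (auto intro: power2_le_imp_le)
  then have "min (init_sum \<alpha>) (2 * \<alpha>) = 2 * \<alpha>" by simp
  then have "gauss_integral (init_sum \<alpha>) (2 * \<alpha>) (pi / 2) \<le> (pi / 2) / (2 * \<alpha>)"
    using gauss_integral_pi_half_bounds(2)[OF init_sum_pos[of \<alpha>], of "2 * \<alpha>"] assms by simp
  then show ?thesis unfolding period_def using assms by (simp add: field_simps)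
qed

text \<open>A crude bound: it only serves to show \<open>period \<alpha> \<rightarrow> \<infinity>\<close> as \<open>\<alpha> \<rightarrow> 0\<close>.\<close>

lemma period_ge_log:
  assumes "0 < \<alpha>" "\<alpha> < 1 / 2"
  shows "- 2 * ln (2 * \<alpha>) \<le> period \<alpha>"
proof -
  define b c where "b = init_sum \<alpha>" and "c = 2 * \<alpha>"
  have c: "0 < c" "c < 1" unfolding c_def using assms by auto
  have "\<alpha>\<^sup>2 \<le> 1" using assms by (simp add: power_le_one)
  then have "b\<^sup>2 \<le> 2\<^sup>2" unfolding b_def init_sum_squared by simp
  then have b: "1 \<le> b" "b \<le> 2"
    using init_sum_ge_1[of \<alpha>] power2_le_imp_le[of b 2] unfolding b_def by auto
  have "1 * 1 \<le> b * (pi / 2)" using b pi_ge_two by (intro mult_mono) auto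
  then have "0 \<le> ln (b * (pi / 2) + c)" using c by simp
  moreover have "0 < - ln c" using c by simp
  ultimately have "- ln c / 2 \<le> (ln (b * (pi / 2) + c) - ln c) / b"
    using b by (smt (verit) divide_right_mono frac_le)
  also have "\<dots> \<le> gauss_integral b c (pi / 2)"
    using b c by (intro gauss_integral_pi_half_ge_log) auto
  finally show ?thesis unfolding period_def b_def c_def by simp
qed

lemma isCont_period:
  assumes "\<alpha>\<^sub>0 > 0"
  shows "isCont period \<alpha>\<^sub>0"
proof -
  define m where "m = min 1 \<alpha>\<^sub>0"
  have m: "m > 0" "m \<le> 1" "m \<le> \<alpha>\<^sub>0" using assms unfolding m_def by auto
  define g where "g \<alpha> = 4 * ((pi / 2) * (6 * \<bar>\<alpha>\<^sup>2 - \<alpha>\<^sub>0\<^sup>2\<bar> / (2 * m ^ 3)))" for \<alpha>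
  have "(g \<longlongrightarrow> g \<alpha>\<^sub>0) (at \<alpha>\<^sub>0)"
    unfolding g_def by (intro tendsto_intros) (use m in auto)
  then have g: "(g \<longlongrightarrow> 0) (at \<alpha>\<^sub>0)" unfolding g_def by simp
  have "\<forall>\<^sub>F \<alpha> in at \<alpha>\<^sub>0. \<alpha> > \<alpha>\<^sub>0 / 2"
    using assms by (intro order_tendstoD(1)[OF tendsto_ident_at]) auto
  then have "\<forall>\<^sub>F \<alpha> in at \<alpha>\<^sub>0. norm (period \<alpha> - period \<alpha>\<^sub>0) \<le> g \<alpha>"
  proof eventually_elim
    case (elim \<alpha>)
    then have "m \<le> 2 * \<alpha>" "m \<le> 2 * \<alpha>\<^sub>0" "m \<le> init_sum \<alpha>" "m \<le> init_sum \<alpha>\<^sub>0"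
      using m init_sum_ge_1[of \<alpha>] init_sum_ge_1[of \<alpha>\<^sub>0] by auto
    then have "\<bar>gauss_integral (init_sum \<alpha>) (2 * \<alpha>) (pi / 2) - gauss_integral (init_sum \<alpha>\<^sub>0) (2 * \<alpha>\<^sub>0) (pi / 2)\<bar>
        \<le> \<bar>pi / 2\<bar> * ((\<bar>(init_sum \<alpha>)\<^sup>2 - (init_sum \<alpha>\<^sub>0)\<^sup>2\<bar> + \<bar>(2 * \<alpha>)\<^sup>2 - (2 * \<alpha>\<^sub>0)\<^sup>2\<bar>) / (2 * m ^ 3))"
      by (intro gauss_integral_lipschitz m(1))
    also have "(init_sum \<alpha>)\<^sup>2 - (init_sum \<alpha>\<^sub>0)\<^sup>2 = 2 * (\<alpha>\<^sup>2 - \<alpha>\<^sub>0\<^sup>2)"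
      unfolding init_sum_squared by simp
    also have "(2 * \<alpha>)\<^sup>2 - (2 * \<alpha>\<^sub>0)\<^sup>2 = 4 * (\<alpha>\<^sup>2 - \<alpha>\<^sub>0\<^sup>2)"
      by (simp add: power_mult_distrib)
    also have "\<bar>2 * (\<alpha>\<^sup>2 - \<alpha>\<^sub>0\<^sup>2)\<bar> + \<bar>4 * (\<alpha>\<^sup>2 - \<alpha>\<^sub>0\<^sup>2)\<bar> = 6 * \<bar>\<alpha>\<^sup>2 - \<alpha>\<^sub>0\<^sup>2\<bar>"
      by (simp only: abs_mult abs_numeral)
    finally show ?case unfolding period_def g_def by simp
  qed
  then have "((\<lambda>\<alpha>. period \<alpha> - period \<alpha>\<^sub>0) \<longlongrightarrow> 0) (at \<alpha>\<^sub>0)"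
    using g by (rule Lim_null_comparison)
  then show ?thesis unfolding isCont_def by (simp add: LIM_zero_iff)
qed

lemma period_surj:
  assumes L: "L > period (1 / 2)"
  obtains \<alpha> where "0 < \<alpha>" "\<alpha> < 1 / 2" "period \<alpha> = L"
proof -
  define \<alpha>\<^sub>0 where "\<alpha>\<^sub>0 = min (1 / 4) (exp (- L) / 2)"
  have \<alpha>\<^sub>0: "0 < \<alpha>\<^sub>0" "\<alpha>\<^sub>0 < 1 / 2" unfolding \<alpha>\<^sub>0_def by auto
  have "ln (2 * \<alpha>\<^sub>0) \<le> ln (exp (- L))"
    using \<alpha>\<^sub>0 unfolding \<alpha>\<^sub>0_def by (subst ln_le_cancel_iff) auto
  then have "2 * L \<le> period \<alpha>\<^sub>0" using period_ge_log[OF \<alpha>\<^sub>0] by simp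
  moreover have "period (1 / 2) > 0" by (rule period_pos) simp
  ultimately have "period (1 / 2) \<le> L" "L \<le> period \<alpha>\<^sub>0" using L by linarith+
  then obtain \<alpha> where "\<alpha>\<^sub>0 \<le> \<alpha>" "\<alpha> \<le> 1 / 2" "period \<alpha> = L"
    using IVT2[of period "1 / 2" L \<alpha>\<^sub>0] \<alpha>\<^sub>0 isCont_period by auto
  moreover have "\<alpha> \<noteq> 1 / 2" using \<open>period \<alpha> = L\<close> L by fastforce
  ultimately show ?thesis using \<alpha>\<^sub>0 by (intro that[of \<alpha>]) auto
qed

lemma alpha_of_period:
  assumes "0 < \<alpha>" "\<alpha> < 1 / sqrt 2"
  shows "alpha_of (period \<alpha>) = \<alpha>"
  unfolding alpha_of_def
proof (rule the_equality)
  show "0 < \<alpha> \<and> \<alpha> < 1 / sqrt 2 \<and> L_alpha \<alpha> = period \<alpha>"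
    using assms L_alpha_eq_period by simp
next
  fix \<beta> assume "0 < \<beta> \<and> \<beta> < 1 / sqrt 2 \<and> L_alpha \<beta> = period \<alpha>"
  then have "0 < \<beta>" "period \<beta> = period \<alpha>" using L_alpha_eq_period by auto
  then show "\<beta> = \<alpha>"
    using period_strict_antimono[of \<alpha> \<beta>] period_strict_antimono[of \<beta> \<alpha>] assms(1)
    by (cases \<alpha> \<beta> rule: linorder_cases) auto
qed

lemma half_less_inverse_sqrt2: "1 / 2 < 1 / sqrt (2 :: real)"
  by (simp add: real_less_lsqrt divide_strict_left_mono)

lemma alpha_of_bounds:
  assumes "L > period (1 / 2)"
  shows "0 < alpha_of L" "alpha_of L < 1 / 2" "period (alpha_of L) = L"
proof -
  obtain \<alpha> where \<alpha>: "0 < \<alpha>" "\<alpha> < 1 / 2" "period \<alpha> = L"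
    using period_surj[OF assms] .
  then have "alpha_of L = \<alpha>"
    using alpha_of_period half_less_inverse_sqrt2 by fastforce
  then show "0 < alpha_of L" "alpha_of L < 1 / 2" "period (alpha_of L) = L" using \<alpha> by auto
qed

lemma alpha_of_le:
  assumes L: "L > period (1 / 2)"
  shows "alpha_of L \<le> pi / L"
proof -
  note \<alpha> = alpha_of_bounds[OF L]
  have "(alpha_of L)\<^sup>2 \<le> 1 / 2"
    using \<alpha> power_mono[of "alpha_of L" "1 / 2" 2] by (simp add: power_divide)
  then have "L \<le> pi / alpha_of L" using period_le[OF \<alpha>(1)] \<alpha>(3) by simp
  moreover have "L > 0" using L period_pos[of "1 / 2"] by simp
  ultimately show ?thesis using \<alpha>(1) by (simp add: field_simps)
qed

lemma alpha_of_tendsto_0: "(alpha_of \<longlongrightarrow> 0) at_top"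
proof (rule tendsto_sandwich[of "\<lambda>_. 0" _ _ "\<lambda>L. pi / L"])
  have L: "\<forall>\<^sub>F L in at_top. L > period (1 / 2)" by (rule eventually_gt_at_top)
  show "\<forall>\<^sub>F L in at_top. 0 \<le> alpha_of L"
    using L by eventually_elim (use alpha_of_bounds in \<open>auto intro: less_imp_le\<close>)
  show "\<forall>\<^sub>F L in at_top. alpha_of L \<le> pi / L"
    using L by eventually_elim (rule alpha_of_le)
  show "((\<lambda>L. pi / L) \<longlongrightarrow> 0) at_top"
    by (intro tendsto_divide_0[OF tendsto_const] filterlim_at_top_imp_at_infinity filterlim_ident)
qed simp

lemma isCont_alpha_of:
  assumes L: "L > period (1 / 2)"
  shows "isCont alpha_of L"
proof -
  define \<alpha> where "\<alpha> = alpha_of L"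
  note \<alpha> = alpha_of_bounds[OF L, folded \<alpha>_def]
  have "isCont alpha_of (period \<alpha>)"
  proof (rule isCont_inverse_function2[of "\<alpha> / 2" \<alpha> "(\<alpha> + 1 / 2) / 2"])
    fix z assume "\<alpha> / 2 \<le> z" "z \<le> (\<alpha> + 1 / 2) / 2"
    then have "0 < z" "z < 1 / 2" using \<alpha> by auto
    then have "0 < z" "z < 1 / sqrt 2" using less_trans[OF _ half_less_inverse_sqrt2] by blast+
    then show "alpha_of (period z) = z" "isCont period z"
      by (simp_all add: alpha_of_period isCont_period)
  qed (use \<alpha> in auto)
  then show ?thesis using \<alpha>(3) by simp
qed

section \<open>Uniqueness for the initial value problem\<close>

lemma has_vector_derivative_components:
  fixes f :: "real \<Rightarrow> real \<times> real \<times> real"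
  assumes "(f has_vector_derivative v) (at t)"
  shows "((\<lambda>t. fst (f t)) has_real_derivative fst v) (at t)"
    "((\<lambda>t. fst (snd (f t))) has_real_derivative fst (snd v)) (at t)"
    "((\<lambda>t. snd (snd (f t))) has_real_derivative snd (snd v)) (at t)"
proof -
  have f: "(f has_derivative (\<lambda>h. h *\<^sub>R v)) (at t)"
    using assms unfolding has_vector_derivative_def .
  have scale: "(\<lambda>h. h * w) = (*) w" for w :: real by (rule ext) (simp add: mult.commute)
  have "((\<lambda>t. fst (f t)) has_derivative (*) (fst v)) (at t)"
    using has_derivative_fst[OF f] by (simp add: scale)
  then show "((\<lambda>t. fst (f t)) has_real_derivative fst v) (at t)"
    unfolding has_field_derivative_def .
  have "((\<lambda>t. fst (snd (f t))) has_derivative (*) (fst (snd v))) (at t)"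
    using has_derivative_fst[OF has_derivative_snd[OF f]] by (simp add: scale)
  then show "((\<lambda>t. fst (snd (f t))) has_real_derivative fst (snd v)) (at t)"
    unfolding has_field_derivative_def .
  have "((\<lambda>t. snd (snd (f t))) has_derivative (*) (snd (snd v))) (at t)"
    using has_derivative_snd[OF has_derivative_snd[OF f]] by (simp add: scale)
  then show "((\<lambda>t. snd (snd (f t))) has_real_derivative snd (snd v)) (at t)"
    unfolding has_field_derivative_def .
qed

lemma vf_solution_derivatives:
  fixes f :: "real \<Rightarrow> real \<times> real \<times> real"
  assumes "\<And>t. (f has_vector_derivative vf (f t)) (at t)"
  shows "((\<lambda>t. fst (f t)) has_real_derivative - fst (f t) * snd (snd (f t))) (at t)"
    "((\<lambda>t. fst (snd (f t))) has_real_derivative fst (snd (f t)) * snd (snd (f t))) (at t)"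
    "((\<lambda>t. snd (snd (f t))) has_real_derivative (fst (f t))\<^sup>2 - (fst (snd (f t)))\<^sup>2) (at t)"
  using has_vector_derivative_components[OF assms[of t]] by (simp_all add: vf_def case_prod_beta)

lemma vf_solution_norm_const:
  fixes f :: "real \<Rightarrow> real \<times> real \<times> real"
  assumes "\<And>t. (f has_vector_derivative vf (f t)) (at t)"
  shows "(fst (f t))\<^sup>2 + (fst (snd (f t)))\<^sup>2 + (snd (snd (f t)))\<^sup>2 =
         (fst (f 0))\<^sup>2 + (fst (snd (f 0)))\<^sup>2 + (snd (snd (f 0)))\<^sup>2"
proof (rule DERIV_isconst_all[of _ t 0], intro allI)
  fix t
  show "((\<lambda>t. (fst (f t))\<^sup>2 + (fst (snd (f t)))\<^sup>2 + (snd (snd (f t)))\<^sup>2) has_real_derivative 0) (at t)"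
    using vf_solution_derivatives[OF assms, of t]
    by (auto intro!: derivative_eq_intros simp: algebra_simps power2_eq_square)
qed

lemma gronwall_zero:
  fixes u u' :: "real \<Rightarrow> real"
  assumes deriv: "\<And>t. (u has_real_derivative u' t) (at t)"
    and bound: "\<And>t. \<bar>u' t\<bar> \<le> C * u t" and nonneg: "\<And>t. u t \<ge> 0" and "u 0 = 0"
  shows "u t = 0"
proof (cases "t \<ge> 0")
  case True
  have "exp (- C * t) * u t \<le> exp (- C * 0) * u 0"
  proof (rule DERIV_nonpos_imp_nonincreasing[of 0 t "\<lambda>t. exp (- C * t) * u t", OF True])
    fix s
    have "((\<lambda>t. exp (- C * t) * u t) has_real_derivative exp (- C * s) * (u' s - C * u s)) (at s)"
      using deriv[of s] by (auto intro!: derivative_eq_intros simp: algebra_simps)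
    moreover have "exp (- C * s) * (u' s - C * u s) \<le> 0"
      using bound[of s] by (intro mult_nonneg_nonpos) auto
    ultimately show "\<exists>y. ((\<lambda>t. exp (- C * t) * u t) has_real_derivative y) (at s) \<and> y \<le> 0"
      by blast
  qed
  then show ?thesis using nonneg[of t] \<open>u 0 = 0\<close> by (simp add: mult_le_0_iff)
next
  case False
  have "exp (C * t) * u t \<le> exp (C * 0) * u 0"
  proof (rule DERIV_nonneg_imp_nondecreasing[of t 0 "\<lambda>t. exp (C * t) * u t"])
    fix s
    have "((\<lambda>t. exp (C * t) * u t) has_real_derivative exp (C * s) * (u' s + C * u s)) (at s)"
      using deriv[of s] by (auto intro!: derivative_eq_intros simp: algebra_simps)
    moreover have "exp (C * s) * (u' s + C * u s) \<ge> 0"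
      using bound[of s] by (intro mult_nonneg_nonneg) auto
    ultimately show "\<exists>y. ((\<lambda>t. exp (C * t) * u t) has_real_derivative y) (at s) \<and> y \<ge> 0"
      by blast
  qed (use False in simp)
  then show ?thesis using nonneg[of t] \<open>u 0 = 0\<close> by (simp add: mult_le_0_iff)
qed

lemma vf_difference_bound:
  fixes x1 x2 y1 y2 z1 z2 :: real
  assumes "\<bar>x1\<bar> \<le> 1" "\<bar>y1\<bar> \<le> 1" "\<bar>z1\<bar> \<le> 1"
  shows "\<bar>2 * ((x1 - x2) * (- x1 * z1 + x2 * z2) + (y1 - y2) * (y1 * z1 - y2 * z2)
          + (z1 - z2) * ((x1\<^sup>2 - y1\<^sup>2) - (x2\<^sup>2 - y2\<^sup>2)))\<bar>
         \<le> 3 * ((x1 - x2)\<^sup>2 + (y1 - y2)\<^sup>2 + (z1 - z2)\<^sup>2)"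
proof -
  define dx dy dz where "dx = x1 - x2" and "dy = y1 - y2" and "dz = z1 - z2"
  have identity: "(x1 - x2) * (- x1 * z1 + x2 * z2) + (y1 - y2) * (y1 * z1 - y2 * z2)
          + (z1 - z2) * ((x1\<^sup>2 - y1\<^sup>2) - (x2\<^sup>2 - y2\<^sup>2))
       = z1 * (dy\<^sup>2 - dx\<^sup>2) + x1 * (dx * dz) - y1 * (dy * dz)"
    unfolding dx_def dy_def dz_def by (simp add: power2_eq_square algebra_simps)
  have small: "\<bar>c * w\<bar> \<le> \<bar>w\<bar>" if "\<bar>c\<bar> \<le> 1" for c w :: real
    using that by (simp add: abs_mult mult_left_le_one_le)
  have amgm: "2 * \<bar>p * q\<bar> \<le> p\<^sup>2 + q\<^sup>2" for p q :: real
    using sum_squares_bound[of "\<bar>p\<bar>" "\<bar>q\<bar>"] by (simp add: abs_mult)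
  have "\<bar>z1 * (dy\<^sup>2 - dx\<^sup>2)\<bar> \<le> dy\<^sup>2 + dx\<^sup>2"
    using small[OF assms(3), of "dy\<^sup>2 - dx\<^sup>2"] zero_le_power2[of dx] zero_le_power2[of dy] by linarith
  moreover have "2 * \<bar>x1 * (dx * dz)\<bar> \<le> dx\<^sup>2 + dz\<^sup>2"
    using small[OF assms(1), of "dx * dz"] amgm[of dx dz] by linarith
  moreover have "2 * \<bar>y1 * (dy * dz)\<bar> \<le> dy\<^sup>2 + dz\<^sup>2"
    using small[OF assms(2), of "dy * dz"] amgm[of dy dz] by linarith
  moreover have "\<bar>2 * (A + B - C)\<bar> \<le> 3 * (X + Y + Z)"
    if "\<bar>A\<bar> \<le> Y + X" "2 * \<bar>B\<bar> \<le> X + Z" "2 * \<bar>C\<bar> \<le> Y + Z" "Z \<ge> 0" for A B C X Y Z :: real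
    using that by (simp add: abs_le_iff abs_if split: if_splits)
  ultimately show ?thesis
    unfolding identity unfolding dx_def[symmetric] dy_def[symmetric] dz_def[symmetric]
    using zero_le_power2[of dz] by blast
qed
lemma vf_solution_bounded:
  fixes f :: "real \<Rightarrow> real \<times> real \<times> real"
  assumes f: "\<And>t. (f has_vector_derivative vf (f t)) (at t)"
    and sphere: "(fst (f 0))\<^sup>2 + (fst (snd (f 0)))\<^sup>2 + (snd (snd (f 0)))\<^sup>2 = 1"
  shows "\<bar>fst (f t)\<bar> \<le> 1" "\<bar>fst (snd (f t))\<bar> \<le> 1" "\<bar>snd (snd (f t))\<bar> \<le> 1"
proof -
  have "(fst (f t))\<^sup>2 + (fst (snd (f t)))\<^sup>2 + (snd (snd (f t)))\<^sup>2 = 1"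
    using vf_solution_norm_const[OF f, of t] sphere by simp
  then have "(fst (f t))\<^sup>2 \<le> 1" "(fst (snd (f t)))\<^sup>2 \<le> 1" "(snd (snd (f t)))\<^sup>2 \<le> 1"
    by (smt (verit) zero_le_power2)+
  then show "\<bar>fst (f t)\<bar> \<le> 1" "\<bar>fst (snd (f t))\<bar> \<le> 1" "\<bar>snd (snd (f t))\<bar> \<le> 1"
    by (simp_all add: abs_square_le_1)
qed

lemma vf_solution_unique:
  fixes f g :: "real \<Rightarrow> real \<times> real \<times> real"
  assumes f: "\<And>t. (f has_vector_derivative vf (f t)) (at t)"
    and g: "\<And>t. (g has_vector_derivative vf (g t)) (at t)"
    and "f 0 = g 0"
    and sphere: "(fst (f 0))\<^sup>2 + (fst (snd (f 0)))\<^sup>2 + (snd (snd (f 0)))\<^sup>2 = 1"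
  shows "f t = g t"
proof -
  define x1 y1 z1 where "x1 t = fst (f t)" and "y1 t = fst (snd (f t))" and "z1 t = snd (snd (f t))" for t
  define x2 y2 z2 where "x2 t = fst (g t)" and "y2 t = fst (snd (g t))" and "z2 t = snd (snd (g t))" for t
  note df = vf_solution_derivatives[OF f, folded x1_def y1_def z1_def]
  note dg = vf_solution_derivatives[OF g, folded x2_def y2_def z2_def]
  note bounded = vf_solution_bounded[OF f sphere, folded x1_def y1_def z1_def]
  define u where "u t = (x1 t - x2 t)\<^sup>2 + (y1 t - y2 t)\<^sup>2 + (z1 t - z2 t)\<^sup>2" for t
  define u' where "u' t = 2 * ((x1 t - x2 t) * (- x1 t * z1 t + x2 t * z2 t)
      + (y1 t - y2 t) * (y1 t * z1 t - y2 t * z2 t)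
      + (z1 t - z2 t) * (((x1 t)\<^sup>2 - (y1 t)\<^sup>2) - ((x2 t)\<^sup>2 - (y2 t)\<^sup>2)))" for t
  have "u t = 0"
  proof (rule gronwall_zero[of u u' 3])
    show "(u has_real_derivative u' t) (at t)" for t
      unfolding u_def u'_def using df[of t] dg[of t]
      by (auto intro!: derivative_eq_intros simp: algebra_simps power2_eq_square)
    show "\<bar>u' t\<bar> \<le> 3 * u t" for t
      unfolding u'_def u_def by (rule vf_difference_bound[OF bounded])
    show "u 0 = 0"
      using \<open>f 0 = g 0\<close> unfolding u_def x1_def x2_def y1_def y2_def z1_def z2_def by simp
  qed (simp add: u_def)
  then show ?thesis
    unfolding u_def x1_def x2_def y1_def y2_def z1_def z2_def by (simp add: prod_eq_iff add_nonneg_eq_0_iff)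
qed

section \<open>The explicit solution\<close>

definition amplitude :: "real \<Rightarrow> real \<Rightarrow> real \<Rightarrow> real" where
  "amplitude a b t = (THE \<phi>. gauss_integral a b \<phi> = t)"

context
  fixes a b :: real
  assumes a: "a > 0" and b: "b > 0"
begin

lemma gauss_integral_strict_mono: "x < y \<Longrightarrow> gauss_integral a b x < gauss_integral a b y"
proof (rule DERIV_pos_imp_increasing[of x y "gauss_integral a b"])
  fix z
  show "\<exists>d. (gauss_integral a b has_real_derivative d) (at z) \<and> d > 0"
    using has_real_derivative_gauss_integral[OF a b] gauss_integrand_bounds(3)[OF a b] by blast
qed

lemma gauss_integral_surj: "\<exists>\<phi>. gauss_integral a b \<phi> = t"
proof -
  define M where "M = max a b"
  have M: "M > 0" unfolding M_def using a by simp
  have "\<exists>c \<ge> 1 / M. gauss_integral a b x = x * c" for x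
    using gauss_integral_mvt[OF a b] gauss_integrand_bounds(1)[OF a b] unfolding M_def by metis
  then obtain c c' where c: "c \<ge> 1 / M" "gauss_integral a b (\<bar>t\<bar> * M) = \<bar>t\<bar> * M * c"
    and c': "c' \<ge> 1 / M" "gauss_integral a b (- (\<bar>t\<bar> * M)) = - (\<bar>t\<bar> * M) * c'"
    by meson
  have "t \<le> \<bar>t\<bar> * M * (1 / M)" using M by simp
  also have "\<dots> \<le> gauss_integral a b (\<bar>t\<bar> * M)"
    using mult_left_mono[OF c(1), of "\<bar>t\<bar> * M"] c(2) M by simp
  finally have upper: "t \<le> gauss_integral a b (\<bar>t\<bar> * M)" .
  have "gauss_integral a b (- (\<bar>t\<bar> * M)) \<le> - (\<bar>t\<bar> * M) * (1 / M)"
    using mult_left_mono_neg[OF c'(1), of "- (\<bar>t\<bar> * M)"] c'(2) M by simp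
  also have "\<dots> \<le> t" using M by simp
  finally have lower: "gauss_integral a b (- (\<bar>t\<bar> * M)) \<le> t" .
  moreover have "isCont (gauss_integral a b) x" for x
    by (rule DERIV_isCont[OF has_real_derivative_gauss_integral[OF a b]])
  ultimately show ?thesis
    using IVT[of "gauss_integral a b" "- (\<bar>t\<bar> * M)" t "\<bar>t\<bar> * M", OF lower upper] M by auto
qed

lemma amplitude_gauss_integral [simp]: "amplitude a b (gauss_integral a b \<phi>) = \<phi>"
  unfolding amplitude_def
proof (rule the_equality)
  fix \<psi> assume "gauss_integral a b \<psi> = gauss_integral a b \<phi>"
  then show "\<psi> = \<phi>"
    by (cases \<psi> \<phi> rule: linorder_cases) (auto dest: gauss_integral_strict_mono)
qed simp

lemma gauss_integral_amplitude [simp]: "gauss_integral a b (amplitude a b t) = t"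
  using gauss_integral_surj[of t] by auto

lemma amplitude_0 [simp]: "amplitude a b 0 = 0"
  using amplitude_gauss_integral[of 0] a b by simp

lemma amplitude_add_period: "amplitude a b (t + gauss_integral a b pi) = amplitude a b t + pi"
  using gauss_integral_add_pi[OF a b, of "amplitude a b t"]
  by (metis gauss_integral_amplitude amplitude_gauss_integral)

lemma has_real_derivative_amplitude:
  "(amplitude a b has_real_derivative
     sqrt (a\<^sup>2 * (cos (amplitude a b t))\<^sup>2 + b\<^sup>2 * (sin (amplitude a b t))\<^sup>2)) (at t)"
proof -
  have "isCont (amplitude a b) (gauss_integral a b (amplitude a b t))"
    by (rule isCont_inverse_function[where d = 1])
      (auto intro: DERIV_isCont[OF has_real_derivative_gauss_integral[OF a b]])
  then have "(amplitude a b has_real_derivative inverse (gauss_integrand a b (amplitude a b t))) (at t)"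
  proof (intro DERIV_inverse_function[where f = "gauss_integral a b" and a = "t - 1" and b = "t + 1"])
    show "gauss_integrand a b (amplitude a b t) \<noteq> 0"
      using gauss_integrand_bounds(3)[OF a b] by (metis less_irrefl)
  qed (simp_all add: has_real_derivative_gauss_integral[OF a b])
  then show ?thesis by (simp add: gauss_integrand_def)
qed

end

definition phase :: "real \<Rightarrow> real \<Rightarrow> real" where
  "phase \<alpha> = amplitude (init_sum \<alpha>) (2 * \<alpha>)"

definition sol_speed :: "real \<Rightarrow> real \<Rightarrow> real" where
  "sol_speed \<alpha> \<phi> = sqrt ((init_sum \<alpha>)\<^sup>2 * (cos \<phi>)\<^sup>2 + (2 * \<alpha>)\<^sup>2 * (sin \<phi>)\<^sup>2)"

definition explicit_sol :: "real \<Rightarrow> real \<Rightarrow> real \<times> real \<times> real" where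
  "explicit_sol \<alpha> t =
     ((sol_speed \<alpha> (phase \<alpha> t) + init_diff \<alpha> * cos (phase \<alpha> t)) / 2,
      (sol_speed \<alpha> (phase \<alpha> t) - init_diff \<alpha> * cos (phase \<alpha> t)) / 2,
      init_diff \<alpha> * sin (phase \<alpha> t))"

lemma phase_0 [simp]: "\<alpha> > 0 \<Longrightarrow> phase \<alpha> 0 = 0"
  unfolding phase_def using init_sum_pos by simp

lemma phase_add_half_period:
  assumes "\<alpha> > 0"
  shows "phase \<alpha> (t + period \<alpha> / 2) = phase \<alpha> t + pi"
  using amplitude_add_period[OF init_sum_pos, of "2 * \<alpha>"] assms
    gauss_integral_pi[OF init_sum_pos, of "2 * \<alpha>"]
  unfolding phase_def period_def by simp

lemma has_real_derivative_phase:
  "\<alpha> > 0 \<Longrightarrow> (phase \<alpha> has_real_derivative sol_speed \<alpha> (phase \<alpha> t)) (at t)"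
  unfolding phase_def sol_speed_def using init_sum_pos
  by (intro has_real_derivative_amplitude) auto

lemma sol_speed_pos: "\<alpha> > 0 \<Longrightarrow> sol_speed \<alpha> \<phi> > 0"
  unfolding sol_speed_def using quadform_pos[OF init_sum_pos, of "2 * \<alpha>"] by simp

lemma sol_speed_phase_has_derivative:
  assumes "\<alpha> > 0" "\<alpha>\<^sup>2 \<le> 1 / 2"
  shows "((\<lambda>t. sol_speed \<alpha> (phase \<alpha> t)) has_real_derivative
      - (init_diff \<alpha>)\<^sup>2 * sin (phase \<alpha> t) * cos (phase \<alpha> t)) (at t)"
proof -
  have "(sol_speed \<alpha> has_real_derivative
      ((2 * \<alpha>)\<^sup>2 - (init_sum \<alpha>)\<^sup>2) * sin \<psi> * cos \<psi> / sol_speed \<alpha> \<psi>) (at \<psi>)" for \<psi>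
    using quadform_pos[OF init_sum_pos[of \<alpha>], of "2 * \<alpha>" \<psi>] assms unfolding sol_speed_def
    by (auto intro!: derivative_eq_intros simp: field_simps)
  from DERIV_chain2[OF this has_real_derivative_phase[OF assms(1)]]
  show ?thesis
    using sol_speed_pos[OF assms(1), THEN less_imp_neq, THEN not_sym]
      init_diff_squared[OF assms(2)] init_sum_squared[of \<alpha>]
    by (simp add: power_mult_distrib mult.assoc)
qed

lemma explicit_sol_solves:
  assumes "\<alpha> > 0" "\<alpha>\<^sup>2 \<le> 1 / 2"
  shows "(explicit_sol \<alpha> has_vector_derivative vf (explicit_sol \<alpha> t)) (at t)"
proof -
  let ?h = "sol_speed \<alpha> (phase \<alpha> t)" and ?a = "init_diff \<alpha>" and ?\<phi> = "phase \<alpha> t"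
  note dh = sol_speed_phase_has_derivative[OF assms] and d\<phi> = has_real_derivative_phase[OF assms(1)]
  have "((\<lambda>t. (sol_speed \<alpha> (phase \<alpha> t) + ?a * cos (phase \<alpha> t)) / 2) has_real_derivative
        - ((?h + ?a * cos ?\<phi>) / 2) * (?a * sin ?\<phi>)) (at t)"
    by (rule derivative_eq_intros dh d\<phi> refl | simp)+ (simp add: algebra_simps power2_eq_square)
  moreover have "((\<lambda>t. (sol_speed \<alpha> (phase \<alpha> t) - ?a * cos (phase \<alpha> t)) / 2) has_real_derivative
        ((?h - ?a * cos ?\<phi>) / 2) * (?a * sin ?\<phi>)) (at t)"
    by (rule derivative_eq_intros dh d\<phi> refl | simp)+ (simp add: algebra_simps power2_eq_square)
  moreover have "((\<lambda>t. ?a * sin (phase \<alpha> t)) has_real_derivative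
        ((?h + ?a * cos ?\<phi>) / 2)\<^sup>2 - ((?h - ?a * cos ?\<phi>) / 2)\<^sup>2) (at t)"
    by (rule derivative_eq_intros dh d\<phi> refl | simp)+ (simp add: field_simps power2_eq_square)
  ultimately show ?thesis
    unfolding explicit_sol_def vf_def has_real_derivative_iff_has_vector_derivative
    by (auto intro!: has_vector_derivative_Pair)
qed

lemma explicit_sol_0:
  "\<alpha> > 0 \<Longrightarrow> explicit_sol \<alpha> 0 = ((init_sum \<alpha> + init_diff \<alpha>) / 2, (init_sum \<alpha> - init_diff \<alpha>) / 2, 0)"
  unfolding explicit_sol_def sol_speed_def using init_sum_pos[of \<alpha>] by simp

lemma init_diff_bounds:
  assumes "0 < \<alpha>" "\<alpha> < 1 / 2"
  shows "\<alpha>\<^sup>2 \<le> 1 / 2" "0 < init_diff \<alpha>" "init_diff \<alpha> \<le> 1" "init_diff \<alpha> < init_sum \<alpha>"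
proof -
  have "\<alpha>\<^sup>2 < (1 / 2)\<^sup>2" using assms by (intro power_strict_mono) auto
  then show "\<alpha>\<^sup>2 \<le> 1 / 2" by (simp add: power2_eq_square)
  then have "(init_diff \<alpha>)\<^sup>2 < (init_sum \<alpha>)\<^sup>2"
    using init_diff_squared init_sum_squared assms by simp
  then show "init_diff \<alpha> < init_sum \<alpha>"
    using init_sum_pos[of \<alpha>] by (simp add: power2_less_imp_less)
  show "0 < init_diff \<alpha>" "init_diff \<alpha> \<le> 1"
    unfolding init_diff_def using \<open>\<alpha>\<^sup>2 < (1 / 2)\<^sup>2\<close> by (auto simp: power2_eq_square)
qed

lemma init_xy_eq:
  assumes "L > period (1 / 2)"
  defines "\<alpha> \<equiv> alpha_of L"
  shows "init_xy L = ((init_sum \<alpha> + init_diff \<alpha>) / 2, (init_sum \<alpha> - init_diff \<alpha>) / 2)"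
proof -
  note \<alpha> = alpha_of_bounds[OF assms(1), folded \<alpha>_def]
  define s d where "s = init_sum \<alpha>" and "d = init_diff \<alpha>"
  have sq: "s\<^sup>2 = 1 + 2 * \<alpha>\<^sup>2" "d\<^sup>2 = 1 - 2 * \<alpha>\<^sup>2" and sd: "0 < d" "d < s"
    unfolding s_def d_def using init_sum_squared init_diff_squared init_diff_bounds[OF \<alpha>(1,2)] by auto
  show ?thesis unfolding init_xy_def \<alpha>_def[symmetric] s_def[symmetric] d_def[symmetric]
  proof (rule the_equality)
    fix p :: "real \<times> real"
    obtain x y where p: "p = (x, y)" by fastforce
    assume "fst p > snd p \<and> snd p > 0 \<and> (fst p)\<^sup>2 + (snd p)\<^sup>2 = 1 \<and> fst p * snd p = \<alpha>\<^sup>2"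
    then have "x > y" "y > 0" "x\<^sup>2 + y\<^sup>2 = 1" "x * y = \<alpha>\<^sup>2" unfolding p by auto
    then have "(x + y)\<^sup>2 = s\<^sup>2" "(x - y)\<^sup>2 = d\<^sup>2"
      using sq by (simp_all add: power2_eq_square algebra_simps)
    then have "x + y = s" "x - y = d"
      using \<open>x > y\<close> \<open>y > 0\<close> sd by (simp_all add: power2_eq_iff_nonneg)
    then show "p = ((s + d) / 2, (s - d) / 2)" unfolding p by auto
  qed (use sq sd in \<open>auto simp: power2_eq_square field_simps\<close>)
qed

lemma sol_eq_explicit_sol:
  assumes L: "L > period (1 / 2)"
  shows "sol L = explicit_sol (alpha_of L)"
proof -
  define \<alpha> where "\<alpha> = alpha_of L"
  note \<alpha> = alpha_of_bounds[OF L, folded \<alpha>_def]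
  note bounds = init_diff_bounds[OF \<alpha>(1,2)]
  have init: "explicit_sol \<alpha> 0 = (fst (init_xy L), snd (init_xy L), 0)"
    using init_xy_eq[OF L] explicit_sol_0[OF \<alpha>(1)] unfolding \<alpha>_def by simp
  have solves: "\<And>t. (explicit_sol \<alpha> has_vector_derivative vf (explicit_sol \<alpha> t)) (at t)"
    by (rule explicit_sol_solves[OF \<alpha>(1) bounds(1)])
  have sphere: "(fst (explicit_sol \<alpha> 0))\<^sup>2 + (fst (snd (explicit_sol \<alpha> 0)))\<^sup>2 + (snd (snd (explicit_sol \<alpha> 0)))\<^sup>2 = 1"
    unfolding explicit_sol_0[OF \<alpha>(1)]
    using init_sum_squared[of \<alpha>] init_diff_squared[OF bounds(1)]
    by (simp add: power2_eq_square field_simps)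
  show ?thesis unfolding sol_def \<alpha>_def[symmetric]
  proof (rule the_equality)
    fix g assume "g 0 = (fst (init_xy L), snd (init_xy L), 0) \<and>
        (\<forall>t. (g has_vector_derivative vf (g t)) (at t))"
    then show "g = explicit_sol \<alpha>"
      using vf_solution_unique[of g "explicit_sol \<alpha>"] solves init sphere by auto
  qed (use init solves in simp)
qed

lemma zL_eq:
  "L > period (1 / 2) \<Longrightarrow> zL L t = init_diff (alpha_of L) * sin (phase (alpha_of L) t)"
  unfolding zL_def by (simp add: sol_eq_explicit_sol explicit_sol_def)

section \<open>Differentiation with respect to \<open>L\<close>\<close>

lemma sol_speed_close_to_init_sum:
  assumes "0 < \<alpha>" "\<alpha> < 1 / 2"
  shows "\<bar>sol_speed \<alpha> \<xi> - init_sum \<alpha>\<bar> \<le> \<xi>\<^sup>2"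
proof -
  note bounds = init_diff_bounds[OF assms]
  have "(sol_speed \<alpha> \<xi>)\<^sup>2 = (init_sum \<alpha>)\<^sup>2 * (cos \<xi>)\<^sup>2 + (2 * \<alpha>)\<^sup>2 * (sin \<xi>)\<^sup>2"
    unfolding sol_speed_def using quadform_pos[OF init_sum_pos[of \<alpha>], of "2 * \<alpha>" \<xi>] assms by simp
  also have "\<dots> = (init_sum \<alpha>)\<^sup>2 - (init_diff \<alpha>)\<^sup>2 * (sin \<xi>)\<^sup>2"
    unfolding cos_squared_eq init_sum_squared init_diff_squared[OF bounds(1)]
    by (simp add: algebra_simps power_mult_distrib)
  finally have "(sol_speed \<alpha> \<xi>)\<^sup>2 = (init_sum \<alpha>)\<^sup>2 - (init_diff \<alpha>)\<^sup>2 * (sin \<xi>)\<^sup>2" .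
  moreover have "(init_diff \<alpha>)\<^sup>2 * (sin \<xi>)\<^sup>2 \<le> 1 * \<xi>\<^sup>2"
    using bounds abs_sin_x_le_abs_x[of \<xi>]
    by (intro mult_mono) (auto simp: power_le_one abs_le_square_iff)
  moreover have "\<bar>sol_speed \<alpha> \<xi> - init_sum \<alpha>\<bar> * (sol_speed \<alpha> \<xi> + init_sum \<alpha>)
      = \<bar>(sol_speed \<alpha> \<xi>)\<^sup>2 - (init_sum \<alpha>)\<^sup>2\<bar>"
    using sol_speed_pos[OF assms(1), of \<xi>] init_sum_pos[of \<alpha>]
    by (metis abs_mult abs_of_pos add_pos_pos mult.commute power2_eq_square square_diff_square_factored)
  ultimately have "\<bar>sol_speed \<alpha> \<xi> - init_sum \<alpha>\<bar> * (sol_speed \<alpha> \<xi> + init_sum \<alpha>) \<le> \<xi>\<^sup>2"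
    by simp
  moreover have "\<bar>sol_speed \<alpha> \<xi> - init_sum \<alpha>\<bar> \<le> \<bar>sol_speed \<alpha> \<xi> - init_sum \<alpha>\<bar> * (sol_speed \<alpha> \<xi> + init_sum \<alpha>)"
    using sol_speed_pos[OF assms(1), of \<xi>] init_sum_ge_1[of \<alpha>] by (simp add: mult_le_cancel_left1)
  ultimately show ?thesis by linarith
qed

lemma phase_quotient_bounds:
  assumes \<alpha>: "0 < \<alpha>" "\<alpha> < 1 / 2" and "s \<noteq> 0"
  shows "phase \<alpha> s \<noteq> 0" "\<bar>phase \<alpha> s\<bar> \<le> 2 * \<bar>s\<bar>"
    "\<bar>phase \<alpha> s / s - init_sum \<alpha>\<bar> \<le> (phase \<alpha> s)\<^sup>2"
proof -
  define r where "r = phase \<alpha> s"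
  have pos: "init_sum \<alpha> > 0" "2 * \<alpha> > 0" using init_sum_pos \<alpha> by auto
  obtain \<xi> where \<xi>: "s = r * gauss_integrand (init_sum \<alpha>) (2 * \<alpha>) \<xi>" "\<bar>\<xi>\<bar> \<le> \<bar>r\<bar>"
    using gauss_integral_mvt[OF pos, of r] pos unfolding r_def phase_def by auto
  then show "phase \<alpha> s \<noteq> 0" using \<open>s \<noteq> 0\<close> unfolding r_def by auto
  have "init_sum \<alpha> \<le> 2"
    using init_sum_squared[of \<alpha>] init_diff_bounds(1)[OF \<alpha>] power2_le_imp_le[of "init_sum \<alpha>" 2] by simp
  then have "1 / 2 \<le> 1 / max (init_sum \<alpha>) (2 * \<alpha>)"
    using \<alpha> pos by (intro divide_left_mono) auto
  then have "1 / 2 \<le> gauss_integrand (init_sum \<alpha>) (2 * \<alpha>) \<xi>"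
    using gauss_integrand_bounds(1)[OF pos, of \<xi>] by linarith
  then have "\<bar>r\<bar> * (1 / 2) \<le> \<bar>s\<bar>"
    using mult_left_mono[of "1 / 2" _ "\<bar>r\<bar>"] gauss_integrand_bounds(3)[OF pos, of \<xi>]
    unfolding \<xi>(1) by (simp add: abs_mult)
  then show "\<bar>phase \<alpha> s\<bar> \<le> 2 * \<bar>s\<bar>" unfolding r_def by simp
  have "r / s = sol_speed \<alpha> \<xi>"
    using \<xi>(1) \<open>s \<noteq> 0\<close> \<open>phase \<alpha> s \<noteq> 0\<close> gauss_integrand_bounds(3)[OF pos, of \<xi>]
    unfolding r_def gauss_integrand_def sol_speed_def by (simp add: field_simps)
  then show "\<bar>phase \<alpha> s / s - init_sum \<alpha>\<bar> \<le> (phase \<alpha> s)\<^sup>2"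
    using sol_speed_close_to_init_sum[OF \<alpha>, of \<xi>] power_mono[of "\<bar>\<xi>\<bar>" "\<bar>r\<bar>" 2] \<xi>(2)
    unfolding r_def by simp
qed

lemma eventually_above_period_half:
  "L > period (1 / 2) \<Longrightarrow> \<forall>\<^sub>F L' in nhds L. L' > period (1 / 2)"
  using eventually_nhds_in_open[of "{period (1 / 2)<..}" L] by simp

lemma isCont_init_params_alpha_of:
  assumes "L > period (1 / 2)"
  shows "isCont (\<lambda>L. init_sum (alpha_of L)) L" "isCont (\<lambda>L. init_diff (alpha_of L)) L"
  unfolding init_sum_def init_diff_def using isCont_alpha_of[OF assms]
  by (auto intro!: continuous_intros)

lemma phase_along_family_tendsto:
  assumes L: "L > period (1 / 2)" and c: "c > 0"
  defines "r \<equiv> \<lambda>L'. phase (alpha_of L') (c * (L - L'))"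
  shows "\<forall>\<^sub>F L' in at L. r L' \<noteq> 0" "(r \<longlongrightarrow> 0) (at L)"
    "((\<lambda>L'. r L' / (c * (L - L'))) \<longlongrightarrow> init_sum (alpha_of L)) (at L)"
proof -
  have "\<forall>\<^sub>F L' in at L. L' > period (1 / 2) \<and> L' \<noteq> L"
    using eventually_above_period_half[OF L] unfolding eventually_at_filter
    by eventually_elim auto
  then have bounds: "\<forall>\<^sub>F L' in at L. r L' \<noteq> 0 \<and> \<bar>r L'\<bar> \<le> 2 * \<bar>c * (L - L')\<bar> \<and>
      \<bar>r L' / (c * (L - L')) - init_sum (alpha_of L')\<bar> \<le> (r L')\<^sup>2"
  proof eventually_elim
    case (elim L')
    then have "c * (L - L') \<noteq> 0" using c by simp
    from phase_quotient_bounds[OF alpha_of_bounds(1,2)[of L'] this] elim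
    show ?case unfolding r_def by simp
  qed
  then show "\<forall>\<^sub>F L' in at L. r L' \<noteq> 0" by eventually_elim simp
  have "((\<lambda>L'. 2 * \<bar>c * (L - L')\<bar>) \<longlongrightarrow> 2 * \<bar>c * (L - L)\<bar>) (at L)"
    by (intro tendsto_intros)
  then have lim: "((\<lambda>L'. 2 * \<bar>c * (L - L')\<bar>) \<longlongrightarrow> 0) (at L)" by simp
  have "\<forall>\<^sub>F L' in at L. norm (r L') \<le> 2 * \<bar>c * (L - L')\<bar>"
    using bounds by eventually_elim simp
  then show r0: "(r \<longlongrightarrow> 0) (at L)"
    using lim by (rule Lim_null_comparison)
  have "\<forall>\<^sub>F L' in at L. norm (r L' / (c * (L - L')) - init_sum (alpha_of L')) \<le> (r L')\<^sup>2"
    using bounds by eventually_elim simp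
  moreover have "((\<lambda>L'. (r L')\<^sup>2) \<longlongrightarrow> 0) (at L)"
    using tendsto_power[OF r0, of 2] by simp
  ultimately have "((\<lambda>L'. r L' / (c * (L - L')) - init_sum (alpha_of L')) \<longlongrightarrow> 0) (at L)"
    by (rule Lim_null_comparison)
  moreover have "((\<lambda>L'. init_sum (alpha_of L')) \<longlongrightarrow> init_sum (alpha_of L)) (at L)"
    using isCont_init_params_alpha_of(1)[OF L] by (simp add: isCont_def)
  ultimately have "((\<lambda>L'. (r L' / (c * (L - L')) - init_sum (alpha_of L')) + init_sum (alpha_of L'))
      \<longlongrightarrow> 0 + init_sum (alpha_of L)) (at L)"
    by (rule tendsto_add)
  then show "((\<lambda>L'. r L' / (c * (L - L'))) \<longlongrightarrow> init_sum (alpha_of L)) (at L)"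
    by simp
qed

lemma sin_x_over_x_tendsto_1: "((\<lambda>x::real. sin x / x) \<longlongrightarrow> 1) (at 0)"
  using DERIV_sin[of 0] unfolding has_field_derivative_iff by simp

text \<open>Differentiating \<open>zL L' (c * L)\<close> in \<open>L'\<close> reduces, by periodicity, to this family, whose
  phase vanishes at \<open>L' = L\<close>; so only the first order term of \<open>phase \<alpha> s \<approx> init_sum \<alpha> * s\<close>
  contributes.\<close>

lemma has_real_derivative_sin_phase_family:
  assumes L: "L > period (1 / 2)" and c: "c > 0"
  shows "((\<lambda>L'. init_diff (alpha_of L') * sin (phase (alpha_of L') (c * (L - L')))) has_real_derivative
      - c * init_diff (alpha_of L) * init_sum (alpha_of L)) (at L)"
proof -
  define r where "r L' = phase (alpha_of L') (c * (L - L'))" for L'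
  note r = phase_along_family_tendsto[OF L c, folded r_def]
  have "((\<lambda>L'. init_diff (alpha_of L')) \<longlongrightarrow> init_diff (alpha_of L)) (at L)"
    using isCont_init_params_alpha_of(2)[OF L] by (simp add: isCont_def)
  moreover have "((\<lambda>L'. sin (r L') / r L') \<longlongrightarrow> 1) (at L)"
    using filterlim_compose[OF sin_x_over_x_tendsto_1 filterlim_atI[OF r(2,1)]] .
  ultimately have "((\<lambda>L'. - c * init_diff (alpha_of L') * (sin (r L') / r L') * (r L' / (c * (L - L'))))
      \<longlongrightarrow> - c * init_diff (alpha_of L) * 1 * init_sum (alpha_of L)) (at L)"
    by (intro tendsto_intros r(3))
  moreover have "\<forall>\<^sub>F L' in at L. - c * init_diff (alpha_of L') * (sin (r L') / r L') * (r L' / (c * (L - L')))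
      = (init_diff (alpha_of L') * sin (r L') - init_diff (alpha_of L) * sin (r L)) / (L' - L)"
    using r(1) unfolding eventually_at_filter
  proof eventually_elim
    case (elim L')
    then show ?case using c alpha_of_bounds(1)[OF L] by (simp add: r_def field_simps)
  qed
  ultimately show ?thesis
    unfolding has_field_derivative_iff r_def by (simp add: Lim_transform_eventually)
qed

lemma has_real_derivative_zL_at_L:
  assumes L: "L > period (1 / 2)"
  shows "((\<lambda>L'. zL L' L) has_real_derivative - init_diff (alpha_of L) * init_sum (alpha_of L)) (at L)"
proof -
  have "\<forall>\<^sub>F L' in nhds L. zL L' L = init_diff (alpha_of L') * sin (phase (alpha_of L') (1 * (L - L')))"
    using eventually_above_period_half[OF L]
  proof eventually_elim
    case (elim L')
    define \<alpha> where "\<alpha> = alpha_of L'"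
    note \<alpha> = alpha_of_bounds[OF elim, folded \<alpha>_def]
    have "phase \<alpha> L = phase \<alpha> (((L - L') + period \<alpha> / 2) + period \<alpha> / 2)"
      using \<alpha>(3) by simp
    also have "\<dots> = phase \<alpha> ((L - L') + period \<alpha> / 2) + pi"
      by (rule phase_add_half_period[OF \<alpha>(1)])
    also have "\<dots> = phase \<alpha> (L - L') + 2 * pi"
      using phase_add_half_period[OF \<alpha>(1)] by simp
    finally show ?case unfolding zL_eq[OF elim] \<alpha>_def[symmetric] by (simp add: sin_periodic)
  qed
  then show ?thesis
    using has_real_derivative_sin_phase_family[OF L, of 1] by (subst DERIV_cong_ev) auto
qed

lemma has_real_derivative_zL_at_half_L:
  assumes L: "L > period (1 / 2)"
  shows "((\<lambda>L'. zL L' (L / 2)) has_real_derivative init_diff (alpha_of L) * init_sum (alpha_of L) / 2) (at L)"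
proof -
  have "\<forall>\<^sub>F L' in nhds L. zL L' (L / 2) = - (init_diff (alpha_of L') * sin (phase (alpha_of L') ((1 / 2) * (L - L'))))"
    using eventually_above_period_half[OF L]
  proof eventually_elim
    case (elim L')
    define \<alpha> where "\<alpha> = alpha_of L'"
    note \<alpha> = alpha_of_bounds[OF elim, folded \<alpha>_def]
    have "phase \<alpha> (L / 2) = phase \<alpha> ((1 / 2) * (L - L') + period \<alpha> / 2)"
      using \<alpha>(3) by (simp add: field_simps)
    also have "\<dots> = phase \<alpha> ((1 / 2) * (L - L')) + pi"
      by (rule phase_add_half_period[OF \<alpha>(1)])
    finally show ?case unfolding zL_eq[OF elim] \<alpha>_def[symmetric] by (simp add: sin_periodic_pi)
  qed
  moreover have "((\<lambda>L'. - (init_diff (alpha_of L') * sin (phase (alpha_of L') ((1 / 2) * (L - L')))))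
      has_real_derivative - (- (1 / 2) * init_diff (alpha_of L) * init_sum (alpha_of L))) (at L)"
    using has_real_derivative_sin_phase_family[OF L, of "1 / 2"] by (intro DERIV_minus) auto
  ultimately show ?thesis by (subst DERIV_cong_ev) auto
qed

lemma init_diff_times_init_sum_tendsto: "((\<lambda>L. init_diff (alpha_of L) * init_sum (alpha_of L)) \<longlongrightarrow> 1) at_top"
proof -
  have "isCont (\<lambda>\<alpha>. init_diff \<alpha> * init_sum \<alpha>) 0"
    unfolding init_diff_def init_sum_def by (intro continuous_intros)
  from isCont_tendsto_compose[OF this alpha_of_tendsto_0]
  show ?thesis by (simp add: init_diff_def init_sum_def)
qed

theorem lemma8p6:
  shows "(\<forall>\<^sub>F L in at_top. (\<lambda>L'. zL L' L) differentiable (at L)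
                          \<and> (\<lambda>L'. zL L' (L / 2)) differentiable (at L))
      \<and> ((\<lambda>L. deriv (\<lambda>L'. zL L' L) L) \<longlongrightarrow> -1) at_top
      \<and> ((\<lambda>L. deriv (\<lambda>L'. zL L' (L / 2)) L) \<longlongrightarrow> 1 / 2) at_top"
proof (intro conjI)
  define slope where "slope L = init_diff (alpha_of L) * init_sum (alpha_of L)" for L
  have large: "\<forall>\<^sub>F L in at_top. L > period (1 / 2)" by (rule eventually_gt_at_top)
  note D1 = has_real_derivative_zL_at_L[folded slope_def] and D2 = has_real_derivative_zL_at_half_L[folded slope_def]
  show "\<forall>\<^sub>F L in at_top. (\<lambda>L'. zL L' L) differentiable (at L) \<and> (\<lambda>L'. zL L' (L / 2)) differentiable (at L)"
    using large by eventually_elim (use D1 D2 real_differentiable_def in blast)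
  have "((\<lambda>L. - slope L) \<longlongrightarrow> -1) at_top"
    using init_diff_times_init_sum_tendsto unfolding slope_def by (intro tendsto_intros)
  moreover have "\<forall>\<^sub>F L in at_top. - slope L = deriv (\<lambda>L'. zL L' L) L"
    using large by eventually_elim (simp add: DERIV_imp_deriv[OF D1] slope_def)
  ultimately show "((\<lambda>L. deriv (\<lambda>L'. zL L' L) L) \<longlongrightarrow> -1) at_top"
    by (rule Lim_transform_eventually)
  have "((\<lambda>L. slope L / 2) \<longlongrightarrow> 1 / 2) at_top"
    using init_diff_times_init_sum_tendsto unfolding slope_def by (intro tendsto_intros) auto
  moreover have "\<forall>\<^sub>F L in at_top. slope L / 2 = deriv (\<lambda>L'. zL L' (L / 2)) L"
    using large by eventually_elim (simp add: DERIV_imp_deriv[OF D2] slope_def)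
  ultimately show "((\<lambda>L. deriv (\<lambda>L'. zL L' (L / 2)) L) \<longlongrightarrow> 1 / 2) at_top"
    by (rule Lim_transform_eventually)
qed

end
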